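(* Let $\mathbf{q}\in\mathbf{L}^2$ and $\bar{\mathbf{q}}\in\mathbf{H}^1$, and define $\bm{R}(\mathbf{q})=-\nabla^\perp(-\mathbf{\Delta}-M)^{-1}\mathbf{q}\cdot\nabla\mathbf{q}$. Then for each $\alpha\in(0,1)$ there is a constant $C$ depending only on $\alpha$ and $M$ such that $$\|\bm{R}(\mathbf{q})-\bm{R}(\bar{\mathbf{q}})\|_{\mathbf{H}^{-1-\alpha}}\le C\,\|\mathbf{q}-\bar{\mathbf{q}}\|_{\mathbf{H}^{-\alpha}}\big(\|\mathbf{q}\|+\|\bar{\mathbf{q}}\|_{\mathbf{H}^1}\big).$$
   Context: $\mathcal{D}=[0,L]^2$ periodic; $H^k(\mathcal{D})$, $k\in\mathbb{R}$, Sobolev spaces of $L$-periodic zero-mean functions, $\mathbf{H}^k=H^k\times H^k$ with norm $\|\mathbf{u}\|_{\mathbf{H}^k}^2=\|u_1\|^2_{H^k}+\|u_2\|^2_{H^k}$, $\mathbf{L}^2=\mathbf{H}^0$ with norm $\|\cdot\|$. $\mathbf{\Delta}(u_1,u_2)^t=(\Delta u_1,\Delta u_2)^t$; $M=\begin{pmatrix}-S_1&S_1\\S_2&-S_2\end{pmatrix}$ with $S_1,S_2>0$, and $(-\mathbf{\Delta}-M)^{-1}:\mathbf{H}^k\to\mathbf{H}^{k+2}$ is bounded. For vector fields, $\nabla^\perp\bm{\psi}\cdot\nabla\mathbf{q}:=(\nabla^\perp\psi_1\cdot\nabla q_1,\nabla^\perp\psi_2\cdot\nabla q_2)^t$, $\nabla^\perp=(-\partial_y,\partial_x)$.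 *)

theory Defs
  imports "HOL-Analysis.Analysis"
begin

text \<open>
  L-periodic zero-mean (real-valued) functions / distributions on [0,L]^2 are represented
  by their Fourier coefficients c :: int \<times> int \<Rightarrow> complex, with the convention
  u(x) = \<Sum>_\<xi> c(\<xi>) exp(i k(\<xi>)\<cdot>x), k(\<xi>) = (2\<pi>/L) \<xi>.
  Zero mean: c(0,0) = 0.  Real-valuedness: c(-\<xi>) = cnj (c \<xi>).
\<close>

type_synonym sfield = "int \<times> int \<Rightarrow> complex"
type_synonym vfield = "sfield \<times> sfield"

definition kx :: "real \<Rightarrow> int \<times> int \<Rightarrow> real" where
  "kx L \<xi> = 2 * pi / L * of_int (fst \<xi>)"

definition ky :: "real \<Rightarrow> int \<times> int \<Rightarrow> real" where
  "ky L \<xi> = 2 * pi / L * of_int (snd \<xi>)"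

text \<open>|k(\<xi>)|^2, the Fourier symbol of -\<Delta>.\<close>
definition ksq :: "real \<Rightarrow> int \<times> int \<Rightarrow> real" where
  "ksq L \<xi> = (kx L \<xi>)^2 + (ky L \<xi>)^2"

definition Hnorm2 :: "real \<Rightarrow> real \<Rightarrow> sfield \<Rightarrow> real" where
  "Hnorm2 L s c = (\<Sum>\<^sub>\<infinity>\<xi>\<in>UNIV - {(0,0)}. ksq L \<xi> powr s * (cmod (c \<xi>))^2)"

definition inH :: "real \<Rightarrow> real \<Rightarrow> sfield \<Rightarrow> bool" where
  "inH L s c \<longleftrightarrow> c (0,0) = 0 \<and> (\<forall>a b. c (-a, -b) = cnj (c (a, b))) \<and>
     (\<lambda>\<xi>. ksq L \<xi> powr s * (cmod (c \<xi>))^2) summable_on (UNIV - {(0,0)})"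

definition inHv :: "real \<Rightarrow> real \<Rightarrow> vfield \<Rightarrow> bool" where
  "inHv L s q \<longleftrightarrow> inH L s (fst q) \<and> inH L s (snd q)"

definition Hvnorm :: "real \<Rightarrow> real \<Rightarrow> vfield \<Rightarrow> real" where
  "Hvnorm L s q = sqrt (Hnorm2 L s (fst q) + Hnorm2 L s (snd q))"

definition vdiff :: "vfield \<Rightarrow> vfield \<Rightarrow> vfield" where
  "vdiff q p = ((\<lambda>\<xi>. fst q \<xi> - fst p \<xi>), (\<lambda>\<xi>. snd q \<xi> - snd p \<xi>))"

text \<open>(-\<Delta> - M)^{-1} with M = [[-S1, S1],[S2, -S2]]: at each nonzero wavenumber, the
  solution of (|k|^2 + S1) \<psi>1 - S1 \<psi>2 = q1,  -S2 \<psi>1 + (|k|^2 + S2) \<psi>2 = q2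
  (explicit inverse of the 2x2 symbol); the zero mode is 0.\<close>
definition symdet :: "real \<Rightarrow> real \<Rightarrow> real \<Rightarrow> int \<times> int \<Rightarrow> real" where
  "symdet L S1 S2 \<xi> = (ksq L \<xi> + S1) * (ksq L \<xi> + S2) - S1 * S2"

definition invop :: "real \<Rightarrow> real \<Rightarrow> real \<Rightarrow> vfield \<Rightarrow> vfield" where
  "invop L S1 S2 q =
    ((\<lambda>\<xi>. if \<xi> = (0,0) then 0 else
        (of_real (ksq L \<xi> + S2) * fst q \<xi> + of_real S1 * snd q \<xi>) / of_real (symdet L S1 S2 \<xi>)),
     (\<lambda>\<xi>. if \<xi> = (0,0) then 0 else
        (of_real S2 * fst q \<xi> + of_real (ksq L \<xi> + S1) * snd q \<xi>) / of_real (symdet L S1 S2 \<xi>)))"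

text \<open>Fourier coefficients of \<nabla>^\<perp>\<psi>\<cdot>\<nabla>q (scalar), \<nabla>^\<perp> = (-\<partial>_y, \<partial>_x):
  the convolution of the coefficients of (-\<partial>_y \<psi>, \<partial>_x \<psi>) and (\<partial>_x q, \<partial>_y q).\<close>
definition jac :: "real \<Rightarrow> sfield \<Rightarrow> sfield \<Rightarrow> sfield" where
  "jac L \<psi> q \<xi> = (\<Sum>\<^sub>\<infinity>\<eta>\<in>UNIV.
     let \<zeta> = (fst \<xi> - fst \<eta>, snd \<xi> - snd \<eta>) in
       ((- \<i> * of_real (ky L \<zeta>)) * \<psi> \<zeta>) * ((\<i> * of_real (kx L \<eta>)) * q \<eta>)
     + ((\<i> * of_real (kx L \<zeta>)) * \<psi> \<zeta>) * ((\<i> * of_real (ky L \<eta>)) * q \<eta>))"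

definition Rop :: "real \<Rightarrow> real \<Rightarrow> real \<Rightarrow> vfield \<Rightarrow> vfield" where
  "Rop L S1 S2 q = (let \<psi> = invop L S1 S2 q in
     ((\<lambda>\<xi>. - jac L (fst \<psi>) (fst q) \<xi>), (\<lambda>\<xi>. - jac L (snd \<psi>) (snd q) \<xi>)))"

end

theory Submission
  imports Defs
begin

text \<open>
  Put \<psi> = (-\<Delta>-M)^(-1) q, d = q - q_b and \<psi>_d = (-\<Delta>-M)^(-1) d. By bilinearity R(q) - R(q_b) is,
  up to sign, \<nabla>\<perp>\<psi>_d \<cdot> \<nabla>q + \<nabla>\<perp>\<psi>_b \<cdot> \<nabla>d, and |\<psi>(k)| \<le> (|q_1(k)| + |q_2(k)|) / |k|^2.
  On Fourier coefficients each term is a convolution \<Sum>_\<eta> K(\<xi>,\<eta>) u(\<xi>-\<eta>) v(\<eta>) with u, v square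
  summable once the Sobolev weights are moved into K. Splitting K according to whether
  4|\<eta>|^2 \<le> |\<xi>|^2 gives a part that is square summable in \<xi> uniformly in \<eta> and a part square
  summable in \<eta> uniformly in \<xi>; by Cauchy-Schwarz either kind maps \<ell>^2 \<times> \<ell>^2 to \<ell>^2.
  The uniform bounds come from the lattice sums \<Sum>_{0<|\<xi>|^2\<le>R} |\<xi>|^(-2\<beta>) \<le> C R^(1-\<beta>) / (1-\<beta>)^2,
  used with \<beta> = \<alpha> and \<beta> = 1 - \<alpha> (this is where 0 < \<alpha> < 1 enters), and \<Sum>_{\<xi>\<noteq>0} |\<xi>|^(-4) < \<infinity>.
\<close>

section \<open>Square-summable families and a bilinear convolution bound\<close>

lemma square_add_le: "((a::real) + b)^2 \<le> 2 * a^2 + 2 * b^2"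
proof -
  have "0 \<le> (a - b)^2" by simp
  then show ?thesis by (simp add: power2_eq_square algebra_simps)
qed

lemma square_sum_le_of_le_add:
  fixes D S T :: "'a \<Rightarrow> real"
  assumes "\<And>x. 0 \<le> D x" "\<And>x. D x \<le> S x + T x"
    and S: "(\<lambda>x. (S x)^2) summable_on A" and T: "(\<lambda>x. (T x)^2) summable_on A"
  shows "(\<lambda>x. (D x)^2) summable_on A"
    and "(\<Sum>\<^sub>\<infinity>x\<in>A. (D x)^2) \<le> 2 * (\<Sum>\<^sub>\<infinity>x\<in>A. (S x)^2) + 2 * (\<Sum>\<^sub>\<infinity>x\<in>A. (T x)^2)"
proof -
  have le: "(D x)^2 \<le> 2 * (S x)^2 + 2 * (T x)^2" for x
    using power_mono[OF assms(2)[of x] assms(1)[of x], where n = 2] square_add_le[of "S x" "T x"] by linarith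
  have ST: "(\<lambda>x. 2 * (S x)^2 + 2 * (T x)^2) summable_on A"
    using S T by (intro summable_on_add summable_on_cmult_right)
  show D: "(\<lambda>x. (D x)^2) summable_on A"
    by (rule summable_on_comparison_test[OF ST le]) simp
  have "(\<Sum>\<^sub>\<infinity>x\<in>A. (D x)^2) \<le> (\<Sum>\<^sub>\<infinity>x\<in>A. 2 * (S x)^2 + 2 * (T x)^2)"
    by (rule infsum_mono[OF D ST le])
  also have "\<dots> = 2 * (\<Sum>\<^sub>\<infinity>x\<in>A. (S x)^2) + 2 * (\<Sum>\<^sub>\<infinity>x\<in>A. (T x)^2)"
    using S T by (simp add: infsum_add summable_on_cmult_right infsum_cmult_right')
  finally show "(\<Sum>\<^sub>\<infinity>x\<in>A. (D x)^2) \<le> 2 * (\<Sum>\<^sub>\<infinity>x\<in>A. (S x)^2) + 2 * (\<Sum>\<^sub>\<infinity>x\<in>A. (T x)^2)" .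
qed

lemma weighted_square_summable_add:
  fixes w x y :: "'a \<Rightarrow> real"
  assumes x: "(\<lambda>\<eta>. (w \<eta> * x \<eta>)^2) summable_on UNIV" and y: "(\<lambda>\<eta>. (w \<eta> * y \<eta>)^2) summable_on UNIV"
  shows "(\<lambda>\<eta>. (w \<eta> * (x \<eta> + y \<eta>))^2) summable_on UNIV"
    and "(\<Sum>\<^sub>\<infinity>\<eta>. (w \<eta> * (x \<eta> + y \<eta>))^2) \<le> 2 * (\<Sum>\<^sub>\<infinity>\<eta>. (w \<eta> * x \<eta>)^2) + 2 * (\<Sum>\<^sub>\<infinity>\<eta>. (w \<eta> * y \<eta>)^2)"
  using square_sum_le_of_le_add[of "\<lambda>\<eta>. \<bar>w \<eta> * (x \<eta> + y \<eta>)\<bar>" "\<lambda>\<eta>. \<bar>w \<eta> * x \<eta>\<bar>" "\<lambda>\<eta>. \<bar>w \<eta> * y \<eta>\<bar>" UNIV] x y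
  by (simp_all add: distrib_left abs_triangle_ineq)

lemma weighted_square_summable_diff:
  fixes f g :: "'a \<Rightarrow> complex" and w :: "'a \<Rightarrow> real"
  assumes "(\<lambda>\<eta>. (w \<eta> * cmod (f \<eta>))^2) summable_on UNIV" "(\<lambda>\<eta>. (w \<eta> * cmod (g \<eta>))^2) summable_on UNIV"
    and "\<And>\<eta>. w \<eta> \<ge> 0"
  shows "(\<lambda>\<eta>. (w \<eta> * cmod (f \<eta> - g \<eta>))^2) summable_on UNIV"
proof (rule summable_on_comparison_test[OF weighted_square_summable_add(1)[OF assms(1,2)]])
  show "(w \<eta> * cmod (f \<eta> - g \<eta>))^2 \<le> (w \<eta> * (cmod (f \<eta>) + cmod (g \<eta>)))^2" for \<eta>
    using assms(3) by (intro power_mono mult_left_mono norm_triangle_ineq4) auto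
qed simp

lemma summable_on_infsum_le_of_finite_sums:
  fixes f :: "'a \<Rightarrow> real"
  assumes "\<And>x. x \<in> A \<Longrightarrow> f x \<ge> 0" and "\<And>F. finite F \<Longrightarrow> F \<subseteq> A \<Longrightarrow> sum f F \<le> B"
  shows "f summable_on A" and "infsum f A \<le> B"
proof -
  show sf: "f summable_on A"
    by (rule nonneg_bdd_above_summable_on) (use assms in \<open>auto intro!: bdd_aboveI[where M = B]\<close>)
  show "infsum f A \<le> B"
    by (rule infsum_le_finite_sums[OF sf]) (use assms in auto)
qed

lemma
  fixes h :: "'i \<Rightarrow> 'a \<Rightarrow> real"
  assumes "finite I" and "\<And>i. i \<in> I \<Longrightarrow> h i summable_on A"
  shows summable_on_sum: "(\<lambda>x. \<Sum>i\<in>I. h i x) summable_on A"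
    and infsum_sum: "(\<Sum>\<^sub>\<infinity>x\<in>A. \<Sum>i\<in>I. h i x) = (\<Sum>i\<in>I. \<Sum>\<^sub>\<infinity>x\<in>A. h i x)"
  using assms
proof (induction I rule: finite_induct)
  case (insert i I)
  { case 1 then show ?case
      using insert by (simp add: summable_on_add) }
  { case 2 then show ?case
      using insert by (simp add: infsum_add summable_on_add) }
qed simp_all

lemma summable_on_mult_of_square_summable:
  fixes f g :: "'a \<Rightarrow> real"
  assumes "(\<lambda>x. (f x)^2) summable_on A" and "(\<lambda>x. (g x)^2) summable_on A"
  shows "(\<lambda>x. f x * g x) summable_on A"
proof -
  have sum: "(\<lambda>x. (f x)^2 + (g x)^2) summable_on A"
    using assms by (rule summable_on_add)
  have bound: "\<bar>f x * g x\<bar> \<le> (f x)^2 + (g x)^2" for x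
  proof -
    have "2 * (\<bar>f x\<bar> * \<bar>g x\<bar>) \<le> (f x)^2 + (g x)^2"
      using sum_squares_bound[of "\<bar>f x\<bar>" "\<bar>g x\<bar>"] by (simp add: mult.assoc)
    moreover have "0 \<le> \<bar>f x\<bar> * \<bar>g x\<bar>" by simp
    ultimately show ?thesis unfolding abs_mult by linarith
  qed
  have "(\<lambda>x. norm (f x * g x)) summable_on A"
    by (rule summable_on_comparison_test[OF sum]) (use bound in auto)
  then show ?thesis
    by (rule abs_summable_summable)
qed

lemma Cauchy_Schwarz_ineq_infsum:
  fixes f g :: "'a \<Rightarrow> real"
  assumes f: "(\<lambda>x. (f x)^2) summable_on A" and g: "(\<lambda>x. (g x)^2) summable_on A"
  shows "(\<Sum>\<^sub>\<infinity>x\<in>A. f x * g x)^2 \<le> (\<Sum>\<^sub>\<infinity>x\<in>A. (f x)^2) * (\<Sum>\<^sub>\<infinity>x\<in>A. (g x)^2)"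
proof -
  define P where "P = (\<Sum>\<^sub>\<infinity>x\<in>A. (f x)^2) * (\<Sum>\<^sub>\<infinity>x\<in>A. (g x)^2)"
  have fg: "(\<lambda>x. \<bar>f x\<bar> * \<bar>g x\<bar>) summable_on A"
    by (rule summable_on_mult_of_square_summable) (use f g in simp_all)
  moreover have "(\<Sum>x\<in>F. \<bar>f x\<bar> * \<bar>g x\<bar>) \<le> sqrt P" if "finite F" "F \<subseteq> A" for F
  proof (rule real_le_rsqrt)
    have "(\<Sum>x\<in>F. \<bar>f x\<bar> * \<bar>g x\<bar>)^2 \<le> (\<Sum>x\<in>F. \<bar>f x\<bar>^2) * (\<Sum>x\<in>F. \<bar>g x\<bar>^2)"
      by (rule Cauchy_Schwarz_ineq_sum)
    also have "\<dots> \<le> P"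
      unfolding P_def power2_abs using that
      by (intro mult_mono finite_sum_le_infsum f g sum_nonneg infsum_nonneg) auto
    finally show "(\<Sum>x\<in>F. \<bar>f x\<bar> * \<bar>g x\<bar>)^2 \<le> P" .
  qed
  ultimately have "(\<Sum>\<^sub>\<infinity>x\<in>A. \<bar>f x\<bar> * \<bar>g x\<bar>) \<le> sqrt P"
    by (rule infsum_le_finite_sums)
  moreover have "\<bar>\<Sum>\<^sub>\<infinity>x\<in>A. f x * g x\<bar> \<le> (\<Sum>\<^sub>\<infinity>x\<in>A. \<bar>f x\<bar> * \<bar>g x\<bar>)"
    using norm_infsum_bound[of "\<lambda>x. f x * g x" A] fg by (simp add: abs_mult)
  ultimately have "\<bar>\<Sum>\<^sub>\<infinity>x\<in>A. f x * g x\<bar> \<le> sqrt P" by linarith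
  moreover have "P \<ge> 0"
    unfolding P_def by (intro mult_nonneg_nonneg infsum_nonneg) auto
  ultimately have "\<bar>\<Sum>\<^sub>\<infinity>x\<in>A. f x * g x\<bar>^2 \<le> (sqrt P)^2"
    by (intro power_mono) auto
  with \<open>P \<ge> 0\<close> show ?thesis
    unfolding P_def[symmetric] by simp
qed

lemma
  fixes h :: "'a::ab_group_add \<Rightarrow> real"
  shows summable_on_reindex_diff: "(\<lambda>\<eta>. h (\<xi> - \<eta>)) summable_on UNIV \<longleftrightarrow> h summable_on UNIV"
    and infsum_reindex_diff: "(\<Sum>\<^sub>\<infinity>\<eta>. h (\<xi> - \<eta>)) = (\<Sum>\<^sub>\<infinity>\<zeta>. h \<zeta>)"
  using summable_on_reindex_bij_betw[OF bij_diff[of \<xi>]] infsum_reindex_bij_betw[OF bij_diff[of \<xi>]]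
  by auto

lemma sum_reindex_diff:
  fixes h :: "'a::ab_group_add \<Rightarrow> 'b::comm_monoid_add"
  shows "(\<Sum>\<xi>\<in>F. h (\<xi> - \<eta>)) = (\<Sum>\<zeta>\<in>(\<lambda>\<xi>. \<xi> - \<eta>) ` F. h \<zeta>)"
  by (rule sum.reindex[symmetric, unfolded comp_def]) (auto simp: inj_on_def)

lemma sum_reindex_diff_le_infsum:
  fixes h :: "'a::ab_group_add \<Rightarrow> real"
  assumes "h summable_on UNIV" "\<And>\<zeta>. h \<zeta> \<ge> 0" "finite F"
  shows "(\<Sum>\<xi>\<in>F. h (\<xi> - \<eta>)) \<le> (\<Sum>\<^sub>\<infinity>\<zeta>. h \<zeta>)"
  unfolding sum_reindex_diff by (rule finite_sum_le_infsum) (use assms in auto)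

lemma convolution_square_sum_le_col:
  fixes K :: "'a::ab_group_add \<Rightarrow> 'a \<Rightarrow> real" and u v :: "'a \<Rightarrow> real"
  assumes u: "(\<lambda>\<zeta>. (u \<zeta>)^2) summable_on UNIV" and v: "(\<lambda>\<eta>. (v \<eta>)^2) summable_on UNIV"
    and K: "\<And>\<eta> F. finite F \<Longrightarrow> (\<Sum>\<xi>\<in>F. (K \<xi> \<eta>)^2) \<le> M"
  defines "T \<equiv> \<lambda>\<xi>. \<Sum>\<^sub>\<infinity>\<eta>. K \<xi> \<eta> * u (\<xi> - \<eta>) * v \<eta>"
  shows "(\<lambda>\<eta>. K \<xi> \<eta> * u (\<xi> - \<eta>) * v \<eta>) summable_on UNIV"
    and "(\<lambda>\<xi>. (T \<xi>)^2) summable_on UNIV"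
    and "(\<Sum>\<^sub>\<infinity>\<xi>. (T \<xi>)^2) \<le> M * (\<Sum>\<^sub>\<infinity>\<zeta>. (u \<zeta>)^2) * (\<Sum>\<^sub>\<infinity>\<eta>. (v \<eta>)^2)"
proof -
  define U where "U = (\<Sum>\<^sub>\<infinity>\<zeta>. (u \<zeta>)^2)"
  define V where "V = (\<Sum>\<^sub>\<infinity>\<eta>. (v \<eta>)^2)"
  have U: "U \<ge> 0" unfolding U_def by (rule infsum_nonneg) simp
  have Kv: "(\<lambda>\<eta>. (K \<xi> \<eta> * v \<eta>)^2) summable_on UNIV" for \<xi>
  proof (rule summable_on_comparison_test[OF summable_on_cmult_right[OF v, of M]])
    show "(K \<xi> \<eta> * v \<eta>)^2 \<le> M * (v \<eta>)^2" for \<eta>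
      using K[of "{\<xi>}" \<eta>] by (simp add: power_mult_distrib mult_right_mono)
  qed simp
  have u\<xi>: "(\<lambda>\<eta>. (u (\<xi> - \<eta>))^2) summable_on UNIV" "(\<Sum>\<^sub>\<infinity>\<eta>. (u (\<xi> - \<eta>))^2) = U" for \<xi>
    using u summable_on_reindex_diff[of "\<lambda>\<zeta>. (u \<zeta>)^2"] infsum_reindex_diff[of "\<lambda>\<zeta>. (u \<zeta>)^2"]
    by (simp_all add: U_def)
  have reorder: "K \<xi> \<eta> * u (\<xi> - \<eta>) * v \<eta> = u (\<xi> - \<eta>) * (K \<xi> \<eta> * v \<eta>)" for \<xi> \<eta>
    by simp
  show "(\<lambda>\<eta>. K \<xi> \<eta> * u (\<xi> - \<eta>) * v \<eta>) summable_on UNIV"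
    unfolding reorder by (rule summable_on_mult_of_square_summable[OF u\<xi>(1) Kv])
  have T: "(T \<xi>)^2 \<le> U * (\<Sum>\<^sub>\<infinity>\<eta>. (K \<xi> \<eta> * v \<eta>)^2)" for \<xi>
    using Cauchy_Schwarz_ineq_infsum[OF u\<xi>(1) Kv, of \<xi> \<xi>] unfolding T_def reorder u\<xi>(2) .
  have "(\<Sum>\<xi>\<in>F. (T \<xi>)^2) \<le> M * U * V" if "finite F" for F
  proof -
    have "(\<Sum>\<xi>\<in>F. (T \<xi>)^2) \<le> U * (\<Sum>\<xi>\<in>F. \<Sum>\<^sub>\<infinity>\<eta>. (K \<xi> \<eta> * v \<eta>)^2)"
      unfolding sum_distrib_left by (rule sum_mono) (rule T)
    also have "\<dots> = U * (\<Sum>\<^sub>\<infinity>\<eta>. (\<Sum>\<xi>\<in>F. (K \<xi> \<eta>)^2) * (v \<eta>)^2)"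
      using infsum_sum[OF that Kv] by (simp add: power_mult_distrib sum_distrib_right)
    also have "\<dots> \<le> U * (\<Sum>\<^sub>\<infinity>\<eta>. M * (v \<eta>)^2)"
    proof (intro mult_left_mono infsum_mono U)
      show "(\<lambda>\<eta>. (\<Sum>\<xi>\<in>F. (K \<xi> \<eta>)^2) * (v \<eta>)^2) summable_on UNIV"
        using summable_on_sum[OF that Kv] by (simp add: power_mult_distrib sum_distrib_right)
      show "(\<Sum>\<xi>\<in>F. (K \<xi> \<eta>)^2) * (v \<eta>)^2 \<le> M * (v \<eta>)^2" for \<eta>
        using K[OF that] by (rule mult_right_mono) simp
    qed (use v summable_on_cmult_right in auto)
    finally show ?thesis
      by (simp add: infsum_cmult_right' V_def mult_ac)
  qed
  then show "(\<lambda>\<xi>. (T \<xi>)^2) summable_on UNIV" "(\<Sum>\<^sub>\<infinity>\<xi>. (T \<xi>)^2) \<le> M * U * V"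
    using summable_on_infsum_le_of_finite_sums[of UNIV "\<lambda>\<xi>. (T \<xi>)^2"] by auto
qed

lemma convolution_square_sum_le_row:
  fixes K :: "'a::ab_group_add \<Rightarrow> 'a \<Rightarrow> real" and u v :: "'a \<Rightarrow> real"
  assumes u: "(\<lambda>\<zeta>. (u \<zeta>)^2) summable_on UNIV" and v: "(\<lambda>\<eta>. (v \<eta>)^2) summable_on UNIV"
    and K: "\<And>\<xi> G. finite G \<Longrightarrow> (\<Sum>\<eta>\<in>G. (K \<xi> \<eta>)^2) \<le> M"
  defines "T \<equiv> \<lambda>\<xi>. \<Sum>\<^sub>\<infinity>\<eta>. K \<xi> \<eta> * u (\<xi> - \<eta>) * v \<eta>"
  shows "(\<lambda>\<eta>. K \<xi> \<eta> * u (\<xi> - \<eta>) * v \<eta>) summable_on UNIV"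
    and "(\<lambda>\<xi>. (T \<xi>)^2) summable_on UNIV"
    and "(\<Sum>\<^sub>\<infinity>\<xi>. (T \<xi>)^2) \<le> M * (\<Sum>\<^sub>\<infinity>\<zeta>. (u \<zeta>)^2) * (\<Sum>\<^sub>\<infinity>\<eta>. (v \<eta>)^2)"
proof -
  define U where "U = (\<Sum>\<^sub>\<infinity>\<zeta>. (u \<zeta>)^2)"
  define V where "V = (\<Sum>\<^sub>\<infinity>\<eta>. (v \<eta>)^2)"
  have M: "M \<ge> 0" using K[of "{}"] by simp
  have K\<xi>: "(\<lambda>\<eta>. (K \<xi> \<eta>)^2) summable_on UNIV" "(\<Sum>\<^sub>\<infinity>\<eta>. (K \<xi> \<eta>)^2) \<le> M" for \<xi>
    using summable_on_infsum_le_of_finite_sums[of UNIV "\<lambda>\<eta>. (K \<xi> \<eta>)^2" M] K by auto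
  have uv: "(\<lambda>\<eta>. (u (\<xi> - \<eta>) * v \<eta>)^2) summable_on UNIV" for \<xi>
  proof (rule summable_on_comparison_test[OF summable_on_cmult_right[OF v, of U]])
    show "(u (\<xi> - \<eta>) * v \<eta>)^2 \<le> U * (v \<eta>)^2" for \<eta>
      using finite_sum_le_infsum[OF u, of "{\<xi> - \<eta>}"]
      by (simp add: U_def power_mult_distrib mult_right_mono)
  qed simp
  have reorder: "K \<xi> \<eta> * u (\<xi> - \<eta>) * v \<eta> = K \<xi> \<eta> * (u (\<xi> - \<eta>) * v \<eta>)" for \<xi> \<eta>
    by simp
  show "(\<lambda>\<eta>. K \<xi> \<eta> * u (\<xi> - \<eta>) * v \<eta>) summable_on UNIV"
    unfolding reorder by (rule summable_on_mult_of_square_summable[OF K\<xi>(1) uv])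
  have T: "(T \<xi>)^2 \<le> M * (\<Sum>\<^sub>\<infinity>\<eta>. (u (\<xi> - \<eta>) * v \<eta>)^2)" for \<xi>
  proof -
    have "(T \<xi>)^2 \<le> (\<Sum>\<^sub>\<infinity>\<eta>. (K \<xi> \<eta>)^2) * (\<Sum>\<^sub>\<infinity>\<eta>. (u (\<xi> - \<eta>) * v \<eta>)^2)"
      using Cauchy_Schwarz_ineq_infsum[OF K\<xi>(1) uv] unfolding T_def reorder .
    also have "\<dots> \<le> M * (\<Sum>\<^sub>\<infinity>\<eta>. (u (\<xi> - \<eta>) * v \<eta>)^2)"
      by (intro mult_right_mono K\<xi>(2) infsum_nonneg) simp
    finally show ?thesis .
  qed
  have "(\<Sum>\<xi>\<in>F. (T \<xi>)^2) \<le> M * U * V" if "finite F" for F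
  proof -
    have "(\<Sum>\<xi>\<in>F. (T \<xi>)^2) \<le> M * (\<Sum>\<xi>\<in>F. \<Sum>\<^sub>\<infinity>\<eta>. (u (\<xi> - \<eta>) * v \<eta>)^2)"
      unfolding sum_distrib_left by (rule sum_mono) (rule T)
    also have "\<dots> = M * (\<Sum>\<^sub>\<infinity>\<eta>. (\<Sum>\<xi>\<in>F. (u (\<xi> - \<eta>))^2) * (v \<eta>)^2)"
      using infsum_sum[OF that uv] by (simp add: power_mult_distrib sum_distrib_right)
    also have "\<dots> \<le> M * (\<Sum>\<^sub>\<infinity>\<eta>. U * (v \<eta>)^2)"
    proof (intro mult_left_mono infsum_mono M)
      show "(\<lambda>\<eta>. (\<Sum>\<xi>\<in>F. (u (\<xi> - \<eta>))^2) * (v \<eta>)^2) summable_on UNIV"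
        using summable_on_sum[OF that uv] by (simp add: power_mult_distrib sum_distrib_right)
      show "(\<Sum>\<xi>\<in>F. (u (\<xi> - \<eta>))^2) * (v \<eta>)^2 \<le> U * (v \<eta>)^2" for \<eta>
        unfolding U_def by (intro mult_right_mono sum_reindex_diff_le_infsum u that) simp_all
    qed (use v summable_on_cmult_right in auto)
    finally show ?thesis
      by (simp add: infsum_cmult_right' V_def mult_ac)
  qed
  then show "(\<lambda>\<xi>. (T \<xi>)^2) summable_on UNIV" "(\<Sum>\<^sub>\<infinity>\<xi>. (T \<xi>)^2) \<le> M * U * V"
    using summable_on_infsum_le_of_finite_sums[of UNIV "\<lambda>\<xi>. (T \<xi>)^2"] by auto
qed

lemma convolution_square_sum_le:
  fixes Kc Kr :: "'a::ab_group_add \<Rightarrow> 'a \<Rightarrow> real" and u v :: "'a \<Rightarrow> real"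
  assumes u: "(\<lambda>\<zeta>. (u \<zeta>)^2) summable_on UNIV" and v: "(\<lambda>\<eta>. (v \<eta>)^2) summable_on UNIV"
    and Kc: "\<And>\<eta> F. finite F \<Longrightarrow> (\<Sum>\<xi>\<in>F. (Kc \<xi> \<eta>)^2) \<le> Mc"
    and Kr: "\<And>\<xi> G. finite G \<Longrightarrow> (\<Sum>\<eta>\<in>G. (Kr \<xi> \<eta>)^2) \<le> Mr"
  defines "T \<equiv> \<lambda>\<xi>. \<Sum>\<^sub>\<infinity>\<eta>. (Kc \<xi> \<eta> + Kr \<xi> \<eta>) * u (\<xi> - \<eta>) * v \<eta>"
  shows "(\<lambda>\<eta>. (Kc \<xi> \<eta> + Kr \<xi> \<eta>) * u (\<xi> - \<eta>) * v \<eta>) summable_on UNIV"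
    and "(\<lambda>\<xi>. (T \<xi>)^2) summable_on UNIV"
    and "(\<Sum>\<^sub>\<infinity>\<xi>. (T \<xi>)^2) \<le> 2 * (Mc + Mr) * (\<Sum>\<^sub>\<infinity>\<zeta>. (u \<zeta>)^2) * (\<Sum>\<^sub>\<infinity>\<eta>. (v \<eta>)^2)"
proof -
  note C = convolution_square_sum_le_col[where K = Kc and M = Mc, OF u v Kc]
    and R = convolution_square_sum_le_row[where K = Kr and M = Mr, OF u v Kr]
  define Tc where "Tc \<xi> = (\<Sum>\<^sub>\<infinity>\<eta>. Kc \<xi> \<eta> * u (\<xi> - \<eta>) * v \<eta>)" for \<xi>
  define Tr where "Tr \<xi> = (\<Sum>\<^sub>\<infinity>\<eta>. Kr \<xi> \<eta> * u (\<xi> - \<eta>) * v \<eta>)" for \<xi>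
  have split: "(Kc \<xi> \<eta> + Kr \<xi> \<eta>) * u (\<xi> - \<eta>) * v \<eta>
      = Kc \<xi> \<eta> * u (\<xi> - \<eta>) * v \<eta> + Kr \<xi> \<eta> * u (\<xi> - \<eta>) * v \<eta>" for \<xi> \<eta>
    by (simp add: algebra_simps)
  show "(\<lambda>\<eta>. (Kc \<xi> \<eta> + Kr \<xi> \<eta>) * u (\<xi> - \<eta>) * v \<eta>) summable_on UNIV"
    unfolding split by (rule summable_on_add[OF C(1) R(1)])
  have T: "T \<xi> = Tc \<xi> + Tr \<xi>" for \<xi>
    unfolding T_def Tc_def Tr_def split by (rule infsum_add[OF C(1) R(1)])
  note S = square_sum_le_of_le_add[of "\<lambda>\<xi>. \<bar>T \<xi>\<bar>" "\<lambda>\<xi>. \<bar>Tc \<xi>\<bar>" "\<lambda>\<xi>. \<bar>Tr \<xi>\<bar>" UNIV, unfolded power2_abs]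
  have "\<bar>T \<xi>\<bar> \<le> \<bar>Tc \<xi>\<bar> + \<bar>Tr \<xi>\<bar>" for \<xi>
    unfolding T by (rule abs_triangle_ineq)
  with C(2) R(2) have S: "(\<lambda>\<xi>. (T \<xi>)^2) summable_on UNIV"
      "(\<Sum>\<^sub>\<infinity>\<xi>. (T \<xi>)^2) \<le> 2 * (\<Sum>\<^sub>\<infinity>\<xi>. (Tc \<xi>)^2) + 2 * (\<Sum>\<^sub>\<infinity>\<xi>. (Tr \<xi>)^2)"
    using S unfolding Tc_def Tr_def by auto
  then show "(\<lambda>\<xi>. (T \<xi>)^2) summable_on UNIV" by blast
  have "2 * (\<Sum>\<^sub>\<infinity>\<xi>. (Tc \<xi>)^2) + 2 * (\<Sum>\<^sub>\<infinity>\<xi>. (Tr \<xi>)^2)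
      \<le> 2 * (Mc + Mr) * (\<Sum>\<^sub>\<infinity>\<zeta>. (u \<zeta>)^2) * (\<Sum>\<^sub>\<infinity>\<eta>. (v \<eta>)^2)"
    using C(3) R(3) unfolding Tc_def Tr_def by (simp add: algebra_simps)
  with S(2) show "(\<Sum>\<^sub>\<infinity>\<xi>. (T \<xi>)^2) \<le> 2 * (Mc + Mr) * (\<Sum>\<^sub>\<infinity>\<zeta>. (u \<zeta>)^2) * (\<Sum>\<^sub>\<infinity>\<eta>. (v \<eta>)^2)"
    by linarith
qed

section \<open>Lattice sums\<close>

lemma powr_succ_diff_ge:
  fixes x \<gamma> :: real
  assumes x: "x > 0" and g0: "0 < \<gamma>" and g1: "\<gamma> \<le> 1"
  shows "\<gamma> * (x + 1) powr (\<gamma> - 1) \<le> (x + 1) powr \<gamma> - x powr \<gamma>"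
proof -
  have "\<exists>z. x < z \<and> z < x + 1 \<and> (x + 1) powr \<gamma> - x powr \<gamma> = ((x + 1) - x) * (\<gamma> * z powr (\<gamma> - 1))"
    by (rule MVT2) (use x in \<open>auto intro!: DERIV_powr derivative_eq_intros\<close>)
  then obtain z where z: "x < z" "z < x + 1" "(x + 1) powr \<gamma> - x powr \<gamma> = \<gamma> * z powr (\<gamma> - 1)"
    by auto
  have "(x + 1) powr (\<gamma> - 1) \<le> z powr (\<gamma> - 1)"
    by (rule powr_mono2') (use z x g1 in auto)
  then show ?thesis using z g0 by (simp add: mult_left_mono)
qed

lemma atLeastAtMost_int_symmetric_Suc:
  "{- int (Suc N)..int (Suc N)} = insert (int (Suc N)) (insert (- int (Suc N)) {- int N..int N})"
  by auto

lemma sum_abs_succ_powr_le: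
  fixes \<beta> :: real
  assumes "0 \<le> \<beta>" "\<beta> < 1"
  shows "(\<Sum>a\<in>{- int N..int N}. (real_of_int \<bar>a\<bar> + 1) powr (- \<beta>)) \<le> 2 * (real N + 1) powr (1 - \<beta>) / (1 - \<beta>)"
proof (induction N)
  case 0
  have "1 \<le> 2 / (1 - \<beta>)" using assms by (simp add: field_simps)
  then show ?case by simp
next
  case (Suc N)
  have st: "(1 - \<beta>) * (real N + 2) powr (- \<beta>) \<le> (real N + 2) powr (1 - \<beta>) - (real N + 1) powr (1 - \<beta>)"
    using powr_succ_diff_ge[of "real N + 1" "1 - \<beta>"] assms by (simp add: add.assoc)
  have "(\<Sum>a\<in>{- int (Suc N)..int (Suc N)}. (real_of_int \<bar>a\<bar> + 1) powr (- \<beta>))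
      = 2 * (real N + 2) powr (- \<beta>) + (\<Sum>a\<in>{- int N..int N}. (real_of_int \<bar>a\<bar> + 1) powr (- \<beta>))"
    unfolding atLeastAtMost_int_symmetric_Suc by (simp add: algebra_simps)
  also have "\<dots> \<le> 2 * (real N + 2) powr (- \<beta>) + 2 * (real N + 1) powr (1 - \<beta>) / (1 - \<beta>)"
    using Suc by simp
  also have "\<dots> \<le> 2 * (real (Suc N) + 1) powr (1 - \<beta>) / (1 - \<beta>)"
  proof -
    have "(real N + 2) powr (- \<beta>) \<le> ((real N + 2) powr (1 - \<beta>) - (real N + 1) powr (1 - \<beta>)) / (1 - \<beta>)"
      using st assms by (simp add: pos_le_divide_eq mult.commute)
    also have "\<dots> = (real N + 2) powr (1 - \<beta>) / (1 - \<beta>) - (real N + 1) powr (1 - \<beta>) / (1 - \<beta>)"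
      by (rule diff_divide_distrib)
    finally have "(real N + 2) powr (- \<beta>) \<le> \<dots>" .
    moreover have succ: "real (Suc N) + 1 = real N + 2" by simp
    ultimately show ?thesis unfolding succ by simp
  qed
  finally show ?case .
qed

lemma sum_abs_succ_powr_minus_two_le:
  "(\<Sum>a\<in>{- int N..int N}. (real_of_int \<bar>a\<bar> + 1) powr (- 2)) \<le> 3 - 2 / (real N + 1)"
proof (induction N)
  case 0 then show ?case by simp
next
  case (Suc N)
  have e: "(real_of_int \<bar>a\<bar> + 1) powr (- 2) = 1 / (real_of_int \<bar>a\<bar> + 1)^2" for a
    by (simp add: powr_minus powr_numeral divide_inverse)
  have st1: "2 / (real N + 2)^2 \<le> 2 / ((real N + 1) * (real N + 2))"
    by (rule divide_left_mono) (auto simp: power2_eq_square)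
  have st2: "2 / (real N + 1) - 2 / (real N + 2) = 2 / ((real N + 1) * (real N + 2))"
    by (simp add: field_simps)
  have st: "2 / (real N + 2)^2 \<le> 2 / (real N + 1) - 2 / (real N + 2)"
    using st1 st2 by simp
  have "(\<Sum>a\<in>{- int (Suc N)..int (Suc N)}. (real_of_int \<bar>a\<bar> + 1) powr (- 2))
      = 2 / (real N + 2)^2 + (\<Sum>a\<in>{- int N..int N}. (real_of_int \<bar>a\<bar> + 1) powr (- 2))"
    unfolding atLeastAtMost_int_symmetric_Suc e by (simp add: add.commute add.left_commute)
  also have "\<dots> \<le> 2 / (real N + 2)^2 + (3 - 2 / (real N + 1))" using Suc by simp
  also have "\<dots> \<le> 3 - 2 / (real (Suc N) + 1)"
  proof -
    have succ: "real (Suc N) + 1 = real N + 2" by simp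
    show ?thesis unfolding succ using st by linarith
  qed
  finally show ?case .
qed

definition lattice_sqnorm :: "int \<times> int \<Rightarrow> real" where
  "lattice_sqnorm \<xi> = real_of_int ((fst \<xi>)^2 + (snd \<xi>)^2)"

lemma lattice_sqnorm_nonneg: "lattice_sqnorm \<xi> \<ge> 0"
  by (simp add: lattice_sqnorm_def)

lemma lattice_sqnorm_zero [simp]: "lattice_sqnorm (0,0) = 0"
  by (simp add: lattice_sqnorm_def)

lemma lattice_sqnorm_ge_one: "\<xi> \<noteq> (0,0) \<Longrightarrow> lattice_sqnorm \<xi> \<ge> 1"
proof -
  assume "\<xi> \<noteq> (0,0)"
  then have "fst \<xi> \<noteq> 0 \<or> snd \<xi> \<noteq> 0" by (cases \<xi>) auto
  then have "(fst \<xi>)^2 + (snd \<xi>)^2 \<ge> (1::int)"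
    by (metis add.commute add_increasing2 int_one_le_iff_zero_less zero_le_power2 zero_less_power2)
  then show ?thesis unfolding lattice_sqnorm_def by linarith
qed

lemma abs_succ_mult_le:
  fixes a b :: int
  assumes "(a, b) \<noteq> (0,0)"
  shows "(\<bar>a\<bar> + 1) * (\<bar>b\<bar> + 1) \<le> 4 * (a^2 + b^2)"
proof -
  define m where "m = max \<bar>a\<bar> \<bar>b\<bar>"
  have m: "m \<ge> 1" using assms by (auto simp: m_def)
  have "(\<bar>a\<bar> + 1) * (\<bar>b\<bar> + 1) \<le> (m + 1) * (m + 1)"
    by (intro mult_mono) (auto simp: m_def)
  also have "\<dots> \<le> (2 * m) * (2 * m)"
    using m by (intro mult_mono) auto
  also have "\<dots> \<le> 4 * (a^2 + b^2)"
    by (auto simp: m_def max_def power2_eq_square)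
  finally show ?thesis .
qed

lemma lattice_sqnorm_powr_le:
  assumes "(a, b) \<noteq> (0,0)" "\<beta> \<ge> 0"
  shows "lattice_sqnorm (a, b) powr (- \<beta>)
           \<le> 4 powr \<beta> * ((real_of_int \<bar>a\<bar> + 1) powr (- \<beta>) * (real_of_int \<bar>b\<bar> + 1) powr (- \<beta>))"
proof -
  define x y where "x = real_of_int \<bar>a\<bar> + 1" and "y = real_of_int \<bar>b\<bar> + 1"
  have xy: "x > 0" "y > 0" by (auto simp: x_def y_def)
  have "real_of_int ((\<bar>a\<bar> + 1) * (\<bar>b\<bar> + 1)) \<le> real_of_int (4 * (a^2 + b^2))"
    using abs_succ_mult_le[OF assms(1)] by (simp only: of_int_le_iff)
  then have le: "x * y / 4 \<le> lattice_sqnorm (a, b)"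
    by (simp add: x_def y_def lattice_sqnorm_def)
  have "lattice_sqnorm (a, b) powr (- \<beta>) \<le> (x * y / 4) powr (- \<beta>)"
    by (rule powr_mono2'[OF _ _ le]) (use assms xy in simp_all)
  also have "\<dots> = (x powr (- \<beta>) * y powr (- \<beta>)) / 4 powr (- \<beta>)"
    using xy by (simp add: powr_divide powr_mult)
  also have "\<dots> = 4 powr \<beta> * (x powr (- \<beta>) * y powr (- \<beta>))"
    by (simp add: powr_minus divide_inverse)
  finally show ?thesis by (simp add: x_def y_def)
qed

lemma sum_lattice_sqnorm_powr_box_le:
  assumes "finite S" "S \<subseteq> {- int N..int N} \<times> {- int N..int N}" "(0,0) \<notin> S" "\<beta> \<ge> 0"
  shows "(\<Sum>\<xi>\<in>S. lattice_sqnorm \<xi> powr (- \<beta>)) \<le> 4 powr \<beta> * (\<Sum>a\<in>{- int N..int N}. (real_of_int \<bar>a\<bar> + 1) powr (- \<beta>))^2"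
proof -
  define g where "g a = (real_of_int \<bar>a\<bar> + 1) powr (- \<beta>)" for a :: int
  have g0: "g a \<ge> 0" for a unfolding g_def by simp
  have "(\<Sum>\<xi>\<in>S. lattice_sqnorm \<xi> powr (- \<beta>)) \<le> (\<Sum>\<xi>\<in>S. 4 powr \<beta> * (g (fst \<xi>) * g (snd \<xi>)))"
  proof (rule sum_mono)
    fix \<xi> assume "\<xi> \<in> S"
    then have "\<xi> \<noteq> (0,0)" using assms(3) by auto
    then show "lattice_sqnorm \<xi> powr (- \<beta>) \<le> 4 powr \<beta> * (g (fst \<xi>) * g (snd \<xi>))"
      using lattice_sqnorm_powr_le[of "fst \<xi>" "snd \<xi>" \<beta>] assms(4) by (simp add: g_def)
  qed
  also have "\<dots> \<le> (\<Sum>\<xi>\<in>{- int N..int N} \<times> {- int N..int N}. 4 powr \<beta> * (g (fst \<xi>) * g (snd \<xi>)))"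
    by (rule sum_mono2[OF _ assms(2)]) (simp_all add: g0)
  also have "\<dots> = 4 powr \<beta> * (\<Sum>\<xi>\<in>{- int N..int N} \<times> {- int N..int N}. g (fst \<xi>) * g (snd \<xi>))"
    by (rule sum_distrib_left[symmetric])
  also have "(\<Sum>\<xi>\<in>{- int N..int N} \<times> {- int N..int N}. g (fst \<xi>) * g (snd \<xi>))
      = (\<Sum>a\<in>{- int N..int N}. g a) * (\<Sum>a\<in>{- int N..int N}. g a)"
    unfolding sum_product sum.cartesian_product by (rule sum.cong) auto
  also have "\<dots> = (\<Sum>a\<in>{- int N..int N}. g a)^2" by (rule power2_eq_square[symmetric])
  finally show ?thesis unfolding g_def .
qed

lemma lattice_sqnorm_le_imp_mem_box:
  assumes "lattice_sqnorm \<xi> \<le> R"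
  defines "N \<equiv> nat \<lfloor>sqrt R\<rfloor>"
  shows "\<xi> \<in> {- int N..int N} \<times> {- int N..int N}"
proof -
  have R: "R \<ge> 0"
    using assms(1) lattice_sqnorm_nonneg[of \<xi>] by linarith
  have coord: "\<bar>c\<bar> \<le> int N" if "real_of_int (c^2) \<le> R" for c :: int
  proof -
    from that have "real_of_int \<bar>c\<bar> \<le> sqrt R" by (simp add: real_le_rsqrt)
    then show ?thesis unfolding N_def using R by (simp add: le_floor_iff)
  qed
  have "real_of_int ((fst \<xi>)^2) + real_of_int ((snd \<xi>)^2) \<le> R"
    using assms(1) by (simp add: lattice_sqnorm_def)
  moreover have "0 \<le> real_of_int ((fst \<xi>)^2)" "0 \<le> real_of_int ((snd \<xi>)^2)"
    by simp_all
  ultimately have "\<bar>fst \<xi>\<bar> \<le> int N" "\<bar>snd \<xi>\<bar> \<le> int N"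
    by (intro coord; linarith)+
  then show ?thesis by (cases \<xi>) auto
qed

lemma sum_lattice_sqnorm_powr_ball_le:
  fixes \<beta> R :: real
  assumes "0 \<le> \<beta>" "\<beta> < 1" "R > 0" "finite F"
  shows "(\<Sum>\<xi>\<in>{\<xi>\<in>F. \<xi> \<noteq> (0,0) \<and> lattice_sqnorm \<xi> \<le> R}. lattice_sqnorm \<xi> powr (- \<beta>)) \<le> 16 / (1 - \<beta>)^2 * R powr (1 - \<beta>)"
proof (cases "R < 1")
  case True
  have "\<not> (\<xi> \<noteq> (0,0) \<and> lattice_sqnorm \<xi> \<le> R)" for \<xi>
    using lattice_sqnorm_ge_one[of \<xi>] True by (cases "\<xi> = (0,0)") auto
  then have empty: "{\<xi>\<in>F. \<xi> \<noteq> (0,0) \<and> lattice_sqnorm \<xi> \<le> R} = {}"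
    by blast
  show ?thesis unfolding empty by simp
next
  case False
  define N where "N = nat \<lfloor>sqrt R\<rfloor>"
  have sR: "sqrt R \<ge> 1" using False by simp
  have sub: "{\<xi>\<in>F. \<xi> \<noteq> (0,0) \<and> lattice_sqnorm \<xi> \<le> R} \<subseteq> {- int N..int N} \<times> {- int N..int N}"
    using lattice_sqnorm_le_imp_mem_box[of _ R] by (auto simp: N_def)
  have "(\<Sum>\<xi>\<in>{\<xi>\<in>F. \<xi> \<noteq> (0,0) \<and> lattice_sqnorm \<xi> \<le> R}. lattice_sqnorm \<xi> powr (- \<beta>))
      \<le> 4 powr \<beta> * (\<Sum>a\<in>{- int N..int N}. (real_of_int \<bar>a\<bar> + 1) powr (- \<beta>))^2"
    by (rule sum_lattice_sqnorm_powr_box_le[OF _ sub]) (use assms in auto)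
  also have "\<dots> \<le> 4 powr \<beta> * (2 * (real N + 1) powr (1 - \<beta>) / (1 - \<beta>))^2"
    by (intro mult_left_mono power_mono sum_abs_succ_powr_le) (use assms in \<open>auto intro: sum_nonneg\<close>)
  also have "\<dots> \<le> 4 powr \<beta> * (2 * (2 * sqrt R) powr (1 - \<beta>) / (1 - \<beta>))^2"
  proof -
    have N1: "real N + 1 \<le> 2 * sqrt R" unfolding N_def using sR by linarith
    have "(real N + 1) powr (1 - \<beta>) \<le> (2 * sqrt R) powr (1 - \<beta>)"
      by (rule powr_mono2) (use assms N1 in auto)
    then show ?thesis using assms
      by (intro mult_left_mono power_mono divide_right_mono) auto
  qed
  also have "\<dots> = 16 / (1 - \<beta>)^2 * R powr (1 - \<beta>)"
  proof -
    define p where "p = 1 - \<beta>"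
    define A where "A = (2 * sqrt R) powr p"
    have "A * A = ((2 * sqrt R) * (2 * sqrt R)) powr p"
      unfolding A_def by (rule powr_mult[symmetric])
    also have "(2 * sqrt R) * (2 * sqrt R) = 4 * R" using assms by simp
    also have "(4 * R) powr p = 4 powr p * R powr p" by (rule powr_mult)
    finally have AA: "A * A = 4 powr p * R powr p" .
    have f4: "4 powr \<beta> * 4 powr p = (4::real)" unfolding p_def by (simp add: powr_add[symmetric])
    have pp: "p > 0" unfolding p_def using assms by simp
    have "4 powr \<beta> * (2 * A / p)^2 = 4 * (4 powr \<beta> * (A * A)) / p^2"
      by (simp add: power2_eq_square field_simps)
    also have "\<dots> = 4 * (4 powr \<beta> * 4 powr p * R powr p) / p^2" unfolding AA by (simp add: mult.assoc)
    also have "\<dots> = 16 / p^2 * R powr p" unfolding f4 by simp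
    finally show ?thesis unfolding A_def p_def .
  qed
  finally show ?thesis .
qed

lemma sum_lattice_sqnorm_powr_minus_two_le:
  assumes "finite F"
  shows "(\<Sum>\<xi>\<in>{\<xi>\<in>F. \<xi> \<noteq> (0,0)}. lattice_sqnorm \<xi> powr (- 2)) \<le> 144"
proof -
  define N where "N = nat (Max (insert 0 ((\<lambda>\<xi>. max \<bar>fst \<xi>\<bar> \<bar>snd \<xi>\<bar>) ` F)))"
  have sub: "{\<xi>\<in>F. \<xi> \<noteq> (0,0)} \<subseteq> {- int N..int N} \<times> {- int N..int N}"
  proof
    fix \<xi> assume "\<xi> \<in> {\<xi>\<in>F. \<xi> \<noteq> (0,0)}"
    then have "max \<bar>fst \<xi>\<bar> \<bar>snd \<xi>\<bar> \<le> Max (insert 0 ((\<lambda>\<xi>. max \<bar>fst \<xi>\<bar> \<bar>snd \<xi>\<bar>) ` F))"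
      by (intro Max_ge) (use assms in auto)
    then show "\<xi> \<in> {- int N..int N} \<times> {- int N..int N}"
      by (cases \<xi>) (auto simp: N_def)
  qed
  have "(\<Sum>\<xi>\<in>{\<xi>\<in>F. \<xi> \<noteq> (0,0)}. lattice_sqnorm \<xi> powr (- 2)) \<le> 4 powr 2 * (\<Sum>a\<in>{- int N..int N}. (real_of_int \<bar>a\<bar> + 1) powr (- 2))^2"
    using sum_lattice_sqnorm_powr_box_le[OF _ sub, of 2] assms by simp
  also have "\<dots> \<le> 4 powr 2 * 3^2"
  proof -
    have "(\<Sum>a\<in>{- int N..int N}. (real_of_int \<bar>a\<bar> + 1) powr (- 2)) \<le> 3"
    proof -
      have "2 / (real N + 1) \<ge> 0" by simp
      then show ?thesis using sum_abs_succ_powr_minus_two_le[of N] by linarith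
    qed
    then show ?thesis by (intro mult_left_mono power_mono) (auto intro: sum_nonneg)
  qed
  also have "\<dots> = 144" by simp
  finally show ?thesis .
qed

definition ksq_min :: "real \<Rightarrow> real" where "ksq_min L = (2 * pi / L)^2"

lemma ksq_min_pos: "L > 0 \<Longrightarrow> ksq_min L > 0" by (simp add: ksq_min_def)

lemma ksq_eq_ksq_min: "ksq L \<xi> = ksq_min L * lattice_sqnorm \<xi>"
  unfolding ksq_def kx_def ky_def ksq_min_def lattice_sqnorm_def of_int_add of_int_power power_mult_distrib
  by (simp only: distrib_left)

lemma ksq_ge_ksq_min: "L > 0 \<Longrightarrow> \<xi> \<noteq> (0,0) \<Longrightarrow> ksq L \<xi> \<ge> ksq_min L"
  using lattice_sqnorm_ge_one[of \<xi>] ksq_min_pos[of L] by (simp add: ksq_eq_ksq_min)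

lemma ksq_pos: "L > 0 \<Longrightarrow> \<xi> \<noteq> (0,0) \<Longrightarrow> ksq L \<xi> > 0"
  using ksq_ge_ksq_min ksq_min_pos by (meson less_le_trans)

lemma ksq_nonneg: "ksq L \<xi> \<ge> 0" by (simp add: ksq_def)

text \<open>Since \<open>ksq L (0,0) = 0\<close> and \<open>0 powr _ = 0\<close>, the zero mode never contributes.\<close>
definition ball_weight :: "real \<Rightarrow> real \<Rightarrow> real \<Rightarrow> int \<times> int \<Rightarrow> real" where
  "ball_weight L R \<beta> \<xi> = (if ksq L \<xi> \<le> R then ksq L \<xi> powr (- \<beta>) else 0)"

lemma ball_weight_nonneg: "ball_weight L R \<beta> \<xi> \<ge> 0"
  by (simp add: ball_weight_def)

lemma sum_ball_weight_le:
  assumes L: "L > 0" and b: "0 \<le> \<beta>" "\<beta> < 1" and R: "R > 0" and F: "finite F"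
  shows "(\<Sum>\<xi>\<in>F. ball_weight L R \<beta> \<xi>) \<le> 16 / (1 - \<beta>)^2 / ksq_min L * R powr (1 - \<beta>)"
proof -
  have c: "ksq_min L > 0" using ksq_min_pos[OF L] .
  have "ball_weight L R \<beta> \<xi>
      = ksq_min L powr (- \<beta>) * (if \<xi> \<noteq> (0,0) \<and> lattice_sqnorm \<xi> \<le> R / ksq_min L then lattice_sqnorm \<xi> powr (- \<beta>) else 0)"
    for \<xi>
    using c by (cases "\<xi> = (0,0)") (simp_all add: ball_weight_def ksq_eq_ksq_min powr_mult pos_le_divide_eq mult.commute)
  then have "(\<Sum>\<xi>\<in>F. ball_weight L R \<beta> \<xi>)
      = ksq_min L powr (- \<beta>) * (\<Sum>\<xi>\<in>{\<xi>\<in>F. \<xi> \<noteq> (0,0) \<and> lattice_sqnorm \<xi> \<le> R / ksq_min L}. lattice_sqnorm \<xi> powr (- \<beta>))"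
    using F by (simp add: sum.inter_filter sum_distrib_left)
  also have "\<dots> \<le> ksq_min L powr (- \<beta>) * (16 / (1 - \<beta>)^2 * (R / ksq_min L) powr (1 - \<beta>))"
    by (rule mult_left_mono[OF sum_lattice_sqnorm_powr_ball_le]) (use b R c F in auto)
  also have "\<dots> = 16 / (1 - \<beta>)^2 * (ksq_min L powr (- \<beta>) / ksq_min L powr (1 - \<beta>)) * R powr (1 - \<beta>)"
    by (simp add: powr_divide)
  also have "ksq_min L powr (- \<beta>) / ksq_min L powr (1 - \<beta>) = 1 / ksq_min L"
    using c by (simp add: powr_minus_divide powr_add[symmetric])
  finally show ?thesis by simp
qed

lemma sum_ksq_powr_minus_two_le:
  assumes L: "L > 0" and F: "finite F"
  shows "(\<Sum>\<xi>\<in>F. ksq L \<xi> powr (- 2)) \<le> 144 / (ksq_min L)^2"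
proof -
  have c: "ksq_min L > 0" using ksq_min_pos[OF L] .
  have "ksq L \<xi> powr (- 2) = ksq_min L powr (- 2) * (if \<xi> \<noteq> (0,0) then lattice_sqnorm \<xi> powr (- 2) else 0)" for \<xi>
    by (cases "\<xi> = (0,0)") (simp_all add: ksq_eq_ksq_min powr_mult)
  then have "(\<Sum>\<xi>\<in>F. ksq L \<xi> powr (- 2))
      = ksq_min L powr (- 2) * (\<Sum>\<xi>\<in>{\<xi>\<in>F. \<xi> \<noteq> (0,0)}. lattice_sqnorm \<xi> powr (- 2))"
    using F by (simp add: sum.inter_filter sum_distrib_left)
  also have "\<dots> \<le> ksq_min L powr (- 2) * 144"
    by (rule mult_left_mono[OF sum_lattice_sqnorm_powr_minus_two_le[OF F]]) simp
  also have "ksq_min L powr (- 2) = 1 / (ksq_min L)^2"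
    using c by (simp add: powr_minus_divide)
  finally show ?thesis by simp
qed

section \<open>The two kernels\<close>

lemma kx_diff: "kx L (\<xi> - \<eta>) = kx L \<xi> - kx L \<eta>"
  by (simp add: kx_def right_diff_distrib)

lemma ky_diff: "ky L (\<xi> - \<eta>) = ky L \<xi> - ky L \<eta>"
  by (simp add: ky_def right_diff_distrib)

lemma ksq_zero [simp]: "ksq L (0,0) = 0"
  by (simp add: ksq_def kx_def ky_def)

lemma ksq_diff_commute: "ksq L (\<eta> - \<xi>) = ksq L (\<xi> - \<eta>)"
  by (simp add: ksq_def kx_diff ky_diff power2_commute)

lemma sqrt_ksq_triangle: "sqrt (ksq L \<xi>) \<le> sqrt (ksq L \<eta>) + sqrt (ksq L (\<xi> - \<eta>))"
  using real_sqrt_sum_squares_triangle_ineq[of "kx L \<eta>" "kx L (\<xi> - \<eta>)" "ky L \<eta>" "ky L (\<xi> - \<eta>)"]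
  by (simp add: ksq_def kx_diff ky_diff)

text \<open>The symbol of \<open>\<nabla>\<^sup>\<perp>\<psi> \<cdot> \<nabla>q\<close> on the frequency pair \<open>(\<zeta>, \<eta>)\<close>: \<open>\<zeta>\<close> carries \<open>\<psi>\<close>, \<open>\<eta>\<close> carries \<open>q\<close>.\<close>
definition kcross :: "real \<Rightarrow> int \<times> int \<Rightarrow> int \<times> int \<Rightarrow> real" where
  "kcross L \<zeta> \<eta> = ky L \<zeta> * kx L \<eta> - kx L \<zeta> * ky L \<eta>"

lemma kcross_sq_le: "(kcross L \<zeta> \<eta>)^2 \<le> ksq L \<zeta> * ksq L \<eta>"
proof -
  have "ksq L \<zeta> * ksq L \<eta> - (kcross L \<zeta> \<eta>)^2 = (kx L \<zeta> * kx L \<eta> + ky L \<zeta> * ky L \<eta>)^2"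
    by (simp add: ksq_def kcross_def power2_eq_square algebra_simps)
  then show ?thesis by (metis diff_ge_0_iff_ge zero_le_power2)
qed

lemma kcross_diff_left: "kcross L (\<xi> - \<eta>) \<eta> = kcross L \<xi> \<eta>"
  by (simp add: kcross_def kx_diff ky_diff algebra_simps)

lemma kcross_diff_right: "kcross L (\<xi> - \<eta>) \<eta> = kcross L (\<xi> - \<eta>) \<xi>"
  by (simp add: kcross_def kx_diff ky_diff algebra_simps)

lemma kcross_zero_right [simp]: "kcross L \<zeta> (0,0) = 0"
  by (simp add: kcross_def kx_def ky_def)

lemma kcross_zero_left [simp]: "kcross L (0,0) \<eta> = 0"
  by (simp add: kcross_def kx_def ky_def)

lemma quarter_le_of_sqrt_triangle:
  fixes X Y Z :: real
  assumes "0 \<le> Y" "0 \<le> Z" "sqrt X \<le> sqrt Y + sqrt Z" "4 * Y \<le> X"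
  shows "X / 4 \<le> Z"
proof -
  have "sqrt Y \<le> sqrt X / 2"
    using assms real_sqrt_le_mono[of Y "X / 4"] by (simp add: real_sqrt_divide)
  then have "sqrt X / 2 \<le> sqrt Z" using assms by linarith
  then have "(sqrt X / 2)^2 \<le> (sqrt Z)^2" by (rule power_mono) (use assms in simp)
  then show ?thesis using assms by (simp add: power_divide)
qed

lemma powr_quarter: "0 < x \<Longrightarrow> (x / 4) powr e = 4 powr (- e) * x powr e"
  for x e :: real
  unfolding powr_divide powr_minus by (simp add: divide_inverse)

lemma powr_mult_sq_le:
  fixes X W c \<alpha> :: real
  assumes "0 < X" "c^2 \<le> X * W"
  shows "X powr (-1-\<alpha>) * c^2 \<le> X powr (-\<alpha>) * W"
proof -
  have "X powr (-1-\<alpha>) * c^2 \<le> X powr (-1-\<alpha>) * (X * W)"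
    using assms by (intro mult_left_mono) simp_all
  also have "\<dots> = (X * X powr (-1-\<alpha>)) * W" by (simp add: mult_ac)
  also have "X * X powr (-1-\<alpha>) = X powr (-\<alpha>)"
    using powr_mult_base[of X "-1-\<alpha>"] assms by simp
  finally show ?thesis .
qed

text \<open>Below, \<open>X\<close>, \<open>Y\<close>, \<open>Z\<close> stand for \<open>|\<xi>|\<^sup>2\<close>, \<open>|\<eta>|\<^sup>2\<close>, \<open>|\<xi> - \<eta>|\<^sup>2\<close> and \<open>c\<close> for the cross product;
  the regions are \<open>4Y \<le> X\<close> (low), \<open>Y/4 \<le> Z\<close> (high) and \<open>Y/4 \<le> X\<close> (diagonal).\<close>

lemma weightA_le_low:
  fixes X Y Z c \<alpha> :: real
  assumes "0 < X" "0 \<le> Y" "0 < Z" "0 \<le> \<alpha>" "\<alpha> \<le> 2" "4 * Y \<le> X" "X / 4 \<le> Z" "c^2 \<le> X * Y"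
  shows "X powr (-1-\<alpha>) * c^2 * Z powr (\<alpha>-2) \<le> 4 / X"
proof -
  have "Z powr (\<alpha>-2) \<le> (X / 4) powr (\<alpha>-2)"
    by (rule powr_mono2') (use assms in auto)
  also have "\<dots> = 4 powr (2-\<alpha>) * X powr (\<alpha>-2)"
    using assms by (simp add: powr_quarter)
  also have "\<dots> \<le> 4 powr 2 * X powr (\<alpha>-2)"
    using assms by (intro mult_right_mono powr_mono) auto
  finally have Z: "Z powr (\<alpha>-2) \<le> 16 * X powr (\<alpha>-2)" by simp
  have "X powr (-1-\<alpha>) * c^2 * Z powr (\<alpha>-2) \<le> (X powr (-\<alpha>) * Y) * (16 * X powr (\<alpha>-2))"
    by (rule mult_mono[OF powr_mult_sq_le Z]) (use assms in simp_all)
  also have "\<dots> = 16 * Y * (X powr (-\<alpha>) * X powr (\<alpha>-2))" by (simp only: mult_ac)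
  also have "X powr (-\<alpha>) * X powr (\<alpha>-2) = X powr (-2)"
    by (simp add: powr_add[symmetric])
  also have "X powr (-2) = 1 / X^2"
    using assms(1) by (simp add: powr_minus_divide)
  also have "16 * Y * (1 / X^2) = 4 * (4 * Y) / X^2" by simp
  also have "\<dots> \<le> 4 * X / X^2"
    using assms by (intro divide_right_mono) auto
  also have "\<dots> = 4 / X"
    using assms(1) by (simp add: power2_eq_square)
  finally show ?thesis .
qed

lemma weightA_le_cross:
  fixes X Z c \<alpha> :: real
  assumes "0 < X" "0 < Z" "c^2 \<le> X * Z"
  shows "X powr (-1-\<alpha>) * c^2 * Z powr (\<alpha>-2) \<le> X powr (-\<alpha>) * Z powr (\<alpha>-1)"
proof -
  have "X powr (-1-\<alpha>) * c^2 * Z powr (\<alpha>-2) \<le> X powr (-\<alpha>) * (Z * Z powr (\<alpha>-2))"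
    using mult_right_mono[OF powr_mult_sq_le[OF assms(1,3)], of "Z powr (\<alpha>-2)"] by (simp add: mult.assoc)
  also have "Z * Z powr (\<alpha>-2) = Z powr (\<alpha>-1)"
    using powr_mult_base[of Z "\<alpha>-2"] assms by simp
  finally show ?thesis .
qed

lemma weightA_le_high:
  fixes X Y Z c \<alpha> :: real
  assumes "0 < X" "0 < Y" "0 < Z" "0 \<le> \<alpha>" "\<alpha> \<le> 1" "Y / 4 \<le> Z" "c^2 \<le> X * Z"
  shows "X powr (-1-\<alpha>) * c^2 * Z powr (\<alpha>-2) \<le> 4 * X powr (-\<alpha>) * Y powr (\<alpha>-1)"
proof -
  have "Z powr (\<alpha>-1) \<le> (Y / 4) powr (\<alpha>-1)"
    by (rule powr_mono2') (use assms in auto)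
  also have "\<dots> = 4 powr (1-\<alpha>) * Y powr (\<alpha>-1)"
    using assms(2) by (simp add: powr_quarter)
  also have "\<dots> \<le> 4 powr 1 * Y powr (\<alpha>-1)"
    using assms by (intro mult_right_mono powr_mono) simp_all
  finally have "X powr (-\<alpha>) * Z powr (\<alpha>-1) \<le> X powr (-\<alpha>) * (4 * Y powr (\<alpha>-1))"
    by (intro mult_left_mono) simp_all
  with weightA_le_cross[OF assms(1,3,7), of \<alpha>] show ?thesis
    by (simp only: mult_ac)
qed

lemma weightA_le_diag:
  fixes X Y Z c \<alpha> :: real
  assumes "0 < X" "0 < Y" "0 < Z" "0 \<le> \<alpha>" "\<alpha> \<le> 1" "Y / 4 \<le> X" "c^2 \<le> X * Z"
  shows "X powr (-1-\<alpha>) * c^2 * Z powr (\<alpha>-2) \<le> 4 * Y powr (-\<alpha>) * Z powr (\<alpha>-1)"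
proof -
  have "X powr (-\<alpha>) \<le> (Y / 4) powr (-\<alpha>)"
    by (rule powr_mono2') (use assms in auto)
  also have "\<dots> = 4 powr \<alpha> * Y powr (-\<alpha>)"
    using assms(2) by (simp add: powr_quarter)
  also have "\<dots> \<le> 4 powr 1 * Y powr (-\<alpha>)"
    using assms by (intro mult_right_mono powr_mono) simp_all
  finally have "X powr (-\<alpha>) * Z powr (\<alpha>-1) \<le> 4 * Y powr (-\<alpha>) * Z powr (\<alpha>-1)"
    by (intro mult_right_mono) simp_all
  with weightA_le_cross[OF assms(1,3,7), of \<alpha>] show ?thesis
    by linarith
qed

lemma weightB_le_low:
  fixes X Y Z c \<alpha> :: real
  assumes "0 < X" "0 \<le> Y" "0 < Z" "0 \<le> \<alpha>" "4 * Y \<le> X" "X / 4 \<le> Z" "c^2 \<le> X * Y"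
  shows "X powr (-1-\<alpha>) * c^2 * Z powr (-3) * Y powr \<alpha> \<le> 64 * X powr (-2)"
proof -
  have "Z powr (-3) \<le> (X / 4) powr (-3)"
    by (rule powr_mono2') (use assms in auto)
  also have "\<dots> = 64 * X powr (-3)"
    using assms(1) by (simp add: powr_quarter)
  finally have Z: "Z powr (-3) \<le> 64 * X powr (-3)" .
  have Y: "Y * Y powr \<alpha> \<le> X powr (1 + \<alpha>)"
    using powr_mult_base[of Y \<alpha>] powr_mono2[of "1 + \<alpha>" Y X] assms by simp
  have "X powr (-1-\<alpha>) * c^2 * Z powr (-3) * Y powr \<alpha>
      \<le> (X powr (-\<alpha>) * Y) * (64 * X powr (-3)) * Y powr \<alpha>"
    by (rule mult_right_mono[OF mult_mono[OF powr_mult_sq_le Z]]) (use assms in simp_all)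
  also have "\<dots> = 64 * (X powr (-\<alpha>) * X powr (-3)) * (Y * Y powr \<alpha>)"
    by (simp only: mult_ac)
  also have "\<dots> \<le> 64 * (X powr (-\<alpha>) * X powr (-3)) * X powr (1 + \<alpha>)"
    using Y by (intro mult_left_mono) simp_all
  also have "\<dots> = 64 * X powr (-2)"
    by (simp add: mult.assoc powr_add[symmetric])
  finally show ?thesis .
qed

lemma weightB_le_cross:
  fixes X Y Z c \<alpha> :: real
  assumes "0 < X" "0 < Z" "c^2 \<le> X * Z"
  shows "X powr (-1-\<alpha>) * c^2 * Z powr (-3) * Y powr \<alpha> \<le> X powr (-\<alpha>) * Z powr (-2) * Y powr \<alpha>"
proof -
  have "X powr (-1-\<alpha>) * c^2 * Z powr (-3) * Y powr \<alpha> \<le> X powr (-\<alpha>) * (Z * Z powr (-3)) * Y powr \<alpha>"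
    using mult_right_mono[OF powr_mult_sq_le[OF assms(1,3)], of "Z powr (-3)"]
    by (intro mult_right_mono) (simp_all add: mult.assoc)
  also have "Z * Z powr (-3) = Z powr (-2)"
    using powr_mult_base[of Z "-3"] assms by simp
  finally show ?thesis .
qed

lemma weightB_le_high:
  fixes X Y Z c \<alpha> :: real
  assumes "0 < X" "0 < Y" "0 < Z" "Y / 4 \<le> Z" "c^2 \<le> X * Z"
  shows "X powr (-1-\<alpha>) * c^2 * Z powr (-3) * Y powr \<alpha> \<le> 16 * X powr (-\<alpha>) * Y powr (\<alpha>-2)"
proof -
  have "Z powr (-2) \<le> (Y / 4) powr (-2)"
    by (rule powr_mono2') (use assms in auto)
  also have "\<dots> = 16 * Y powr (-2)"
    using assms(2) by (simp add: powr_quarter)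
  finally have "X powr (-\<alpha>) * Z powr (-2) * Y powr \<alpha> \<le> X powr (-\<alpha>) * (16 * Y powr (-2)) * Y powr \<alpha>"
    by (intro mult_right_mono mult_left_mono) simp_all
  also have "\<dots> = 16 * X powr (-\<alpha>) * Y powr (\<alpha>-2)"
    by (simp add: mult.assoc powr_add[symmetric])
  finally show ?thesis
    using weightB_le_cross[OF assms(1,3,5), of \<alpha> Y] by linarith
qed

lemma weightB_le_diag:
  fixes X Y Z c \<alpha> :: real
  assumes "0 < X" "0 < Y" "0 < Z" "0 \<le> \<alpha>" "\<alpha> \<le> 1" "Y / 4 \<le> X" "c^2 \<le> X * Z"
  shows "X powr (-1-\<alpha>) * c^2 * Z powr (-3) * Y powr \<alpha> \<le> 4 * Z powr (-2)"
proof -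
  have "X powr (-\<alpha>) \<le> (Y / 4) powr (-\<alpha>)"
    by (rule powr_mono2') (use assms in auto)
  also have "\<dots> = 4 powr \<alpha> * Y powr (-\<alpha>)"
    using assms(2) by (simp add: powr_quarter)
  also have "\<dots> \<le> 4 powr 1 * Y powr (-\<alpha>)"
    using assms by (intro mult_right_mono powr_mono) simp_all
  finally have "X powr (-\<alpha>) * Z powr (-2) * Y powr \<alpha> \<le> 4 * Y powr (-\<alpha>) * Z powr (-2) * Y powr \<alpha>"
    by (intro mult_right_mono) simp_all
  also have "\<dots> = 4 * Z powr (-2)"
    using assms(2) by (simp add: mult_ac powr_add[symmetric])
  finally show ?thesis
    using weightB_le_cross[OF assms(1,3,7), of \<alpha> Y] by linarith
qed

text \<open>Kernels of the two bilinear terms \<open>\<nabla>\<^sup>\<perp>\<psi>\<^sub>d \<cdot> \<nabla>q\<close> (\<open>KA\<close>) and \<open>\<nabla>\<^sup>\<perp>\<psi>\<^sub>b \<cdot> \<nabla>d\<close> (\<open>KB\<close>)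
  after the weights of \<open>H\<^sup>-\<^sup>1\<^sup>-\<^sup>\<alpha>\<close> on the output and of \<open>H\<^sup>2\<^sup>-\<^sup>\<alpha> \<times> L\<^sup>2\<close>, resp.
  \<open>H\<^sup>3 \<times> H\<^sup>-\<^sup>\<alpha>\<close>, on the factors have been moved into them.\<close>

definition KA :: "real \<Rightarrow> real \<Rightarrow> int \<times> int \<Rightarrow> int \<times> int \<Rightarrow> real" where
  "KA L \<alpha> \<xi> \<eta> = sqrt (ksq L \<xi> powr (-1-\<alpha>) * (kcross L (\<xi> - \<eta>) \<eta>)^2 * ksq L (\<xi> - \<eta>) powr (\<alpha>-2))"

definition KB :: "real \<Rightarrow> real \<Rightarrow> int \<times> int \<Rightarrow> int \<times> int \<Rightarrow> real" where
  "KB L \<alpha> \<xi> \<eta> =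
     sqrt (ksq L \<xi> powr (-1-\<alpha>) * (kcross L (\<xi> - \<eta>) \<eta>)^2 * ksq L (\<xi> - \<eta>) powr (-3) * ksq L \<eta> powr \<alpha>)"

lemma KA_sq: "(KA L \<alpha> \<xi> \<eta>)^2 = ksq L \<xi> powr (-1-\<alpha>) * (kcross L (\<xi> - \<eta>) \<eta>)^2 * ksq L (\<xi> - \<eta>) powr (\<alpha>-2)"
  by (simp add: KA_def)

lemma KB_sq:
  "(KB L \<alpha> \<xi> \<eta>)^2 = ksq L \<xi> powr (-1-\<alpha>) * (kcross L (\<xi> - \<eta>) \<eta>)^2 * ksq L (\<xi> - \<eta>) powr (-3) * ksq L \<eta> powr \<alpha>"
  by (simp add: KB_def)

lemma KA_zero_left [simp]: "KA L \<alpha> (0,0) \<eta> = 0"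
  by (simp add: KA_def)

lemma KB_zero_left [simp]: "KB L \<alpha> (0,0) \<eta> = 0"
  by (simp add: KB_def)

lemma KA_nonneg: "KA L \<alpha> \<xi> \<eta> \<ge> 0"
  by (simp add: KA_def)

lemma KB_nonneg: "KB L \<alpha> \<xi> \<eta> \<ge> 0"
  by (simp add: KB_def)

definition low_part :: "real \<Rightarrow> (int \<times> int \<Rightarrow> int \<times> int \<Rightarrow> real) \<Rightarrow> int \<times> int \<Rightarrow> int \<times> int \<Rightarrow> real" where
  "low_part L K \<xi> \<eta> = (if 4 * ksq L \<eta> \<le> ksq L \<xi> then K \<xi> \<eta> else 0)"

definition high_part :: "real \<Rightarrow> (int \<times> int \<Rightarrow> int \<times> int \<Rightarrow> real) \<Rightarrow> int \<times> int \<Rightarrow> int \<times> int \<Rightarrow> real" where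
  "high_part L K \<xi> \<eta> = (if 4 * ksq L \<eta> \<le> ksq L \<xi> then 0 else K \<xi> \<eta>)"

lemma high_part_add_low_part: "high_part L K \<xi> \<eta> + low_part L K \<xi> \<eta> = K \<xi> \<eta>"
  by (simp add: high_part_def low_part_def)

lemma kcross_sq_le_ksq_ksq_diff: "(kcross L (\<xi> - \<eta>) \<eta>)^2 \<le> ksq L \<xi> * ksq L (\<xi> - \<eta>)"
  using kcross_sq_le[of L "\<xi> - \<eta>" \<xi>] by (subst kcross_diff_right) (simp add: mult.commute)

lemma kcross_sq_le_ksq_ksq: "(kcross L (\<xi> - \<eta>) \<eta>)^2 \<le> ksq L \<xi> * ksq L \<eta>"
  using kcross_sq_le[of L \<xi> \<eta>] by (simp add: kcross_diff_left)

lemma ksq_diff_ge_quarter: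
  assumes L: "L > 0" and "4 * ksq L \<eta> \<le> ksq L \<xi>" and "\<eta> \<noteq> (0,0)"
  shows "ksq L \<xi> / 4 \<le> ksq L (\<xi> - \<eta>)" and "ksq L (\<xi> - \<eta>) > 0"
proof -
  show "ksq L \<xi> / 4 \<le> ksq L (\<xi> - \<eta>)"
    using sqrt_ksq_triangle[of L \<xi> \<eta>] assms
    by (intro quarter_le_of_sqrt_triangle) (simp_all add: ksq_nonneg)
  then show "ksq L (\<xi> - \<eta>) > 0"
    using ksq_pos[OF L, of \<eta>] assms by linarith
qed

lemma ksq_quarter_le_of_small_diff:
  assumes "4 * ksq L (\<xi> - \<eta>) \<le> ksq L \<eta>"
  shows "ksq L \<eta> / 4 \<le> ksq L \<xi>"
  using sqrt_ksq_triangle[of L \<eta> \<xi>] assms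
  by (intro quarter_le_of_sqrt_triangle) (simp_all add: ksq_nonneg ksq_diff_commute add.commute)

lemma high_part_KA_sq_le:
  assumes L: "L > 0" and \<alpha>: "0 \<le> \<alpha>" "\<alpha> \<le> 1" and \<eta>: "\<eta> \<noteq> (0,0)"
  shows "(high_part L (KA L \<alpha>) \<xi> \<eta>)^2
    \<le> 4 * ksq L \<eta> powr (\<alpha>-1) * ball_weight L (4 * ksq L \<eta>) \<alpha> \<xi>
      + 4 * ksq L \<eta> powr (-\<alpha>) * ball_weight L (ksq L \<eta> / 4) (1-\<alpha>) (\<xi> - \<eta>)"
    (is "_ \<le> ?f + ?g")
proof -
  define X Y Z where "X = ksq L \<xi>" and "Y = ksq L \<eta>" and "Z = ksq L (\<xi> - \<eta>)"
  have Y: "Y > 0" unfolding Y_def using ksq_pos[OF L \<eta>] .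
  have f: "?f \<ge> 0" and g: "?g \<ge> 0" by (simp_all add: ball_weight_nonneg)
  have c: "(kcross L (\<xi> - \<eta>) \<eta>)^2 \<le> X * Z"
    unfolding X_def Z_def by (rule kcross_sq_le_ksq_ksq_diff)
  consider "4 * Y \<le> X" | "X = 0 \<or> Z = 0" | "X < 4 * Y" "0 < X" "0 < Z"
    using ksq_nonneg[of L \<xi>] ksq_nonneg[of L "\<xi> - \<eta>"] unfolding X_def Z_def by fastforce
  then show ?thesis
  proof cases
    case 1
    then show ?thesis using f g by (simp add: high_part_def X_def Y_def)
  next
    case 2
    then show ?thesis using f g by (auto simp: high_part_def KA_sq X_def Z_def)
  next
    case 3
    then have KA: "(high_part L (KA L \<alpha>) \<xi> \<eta>)^2 = X powr (-1-\<alpha>) * (kcross L (\<xi> - \<eta>) \<eta>)^2 * Z powr (\<alpha>-2)"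
      by (simp add: high_part_def KA_sq X_def Y_def Z_def)
    show ?thesis
    proof (cases "Y / 4 \<le> Z")
      case True
      have "(high_part L (KA L \<alpha>) \<xi> \<eta>)^2 \<le> 4 * X powr (-\<alpha>) * Y powr (\<alpha>-1)"
        unfolding KA by (rule weightA_le_high) (use 3 Y \<alpha> True c in auto)
      also have "\<dots> = ?f"
        using 3 by (simp add: ball_weight_def X_def Y_def mult_ac)
      finally show ?thesis using g by linarith
    next
      case False
      then have "Y / 4 \<le> X"
        unfolding X_def Y_def Z_def by (intro ksq_quarter_le_of_small_diff) simp
      then have "(high_part L (KA L \<alpha>) \<xi> \<eta>)^2 \<le> 4 * Y powr (-\<alpha>) * Z powr (\<alpha>-1)"
        unfolding KA by (intro weightA_le_diag) (use 3 Y \<alpha> c in auto)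
      also have "\<dots> = ?g"
        using False by (simp add: ball_weight_def Y_def Z_def)
      finally show ?thesis using f by linarith
    qed
  qed
qed

lemma powr_minus_mult_powr_scale: "0 < Y \<Longrightarrow> Y powr (- a) * (k * Y) powr a = k powr a"
  for Y k a :: real
  by (simp add: powr_mult powr_minus field_simps)

lemma sum_high_part_KA_sq_le:
  assumes L: "L > 0" and \<alpha>: "0 < \<alpha>" "\<alpha> < 1" and F: "finite F"
  shows "(\<Sum>\<xi>\<in>F. (high_part L (KA L \<alpha>) \<xi> \<eta>)^2) \<le> 256 / ((1-\<alpha>)^2 * ksq_min L) + 64 / (\<alpha>^2 * ksq_min L)"
proof (cases "\<eta> = (0,0)")
  case True
  have "0 \<le> 256 / ((1-\<alpha>)^2 * ksq_min L) + 64 / (\<alpha>^2 * ksq_min L)"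
    using ksq_min_pos[OF L] by (intro add_nonneg_nonneg divide_nonneg_nonneg) auto
  with True show ?thesis by (simp add: high_part_def ksq_nonneg)
next
  case False
  define Y k where "Y = ksq L \<eta>" and "k = ksq_min L"
  have Y: "Y > 0" and k: "k > 0"
    unfolding Y_def k_def using ksq_pos[OF L False] ksq_min_pos[OF L] .
  have "(\<Sum>\<xi>\<in>F. (high_part L (KA L \<alpha>) \<xi> \<eta>)^2)
      \<le> (\<Sum>\<xi>\<in>F. 4 * Y powr (\<alpha>-1) * ball_weight L (4 * Y) \<alpha> \<xi>
                   + 4 * Y powr (-\<alpha>) * ball_weight L (Y / 4) (1-\<alpha>) (\<xi> - \<eta>))"
    unfolding Y_def by (intro sum_mono high_part_KA_sq_le) (use L \<alpha> False in auto)
  also have "\<dots> = 4 * Y powr (\<alpha>-1) * (\<Sum>\<xi>\<in>F. ball_weight L (4 * Y) \<alpha> \<xi>)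
      + 4 * Y powr (-\<alpha>) * (\<Sum>\<zeta>\<in>(\<lambda>\<xi>. \<xi> - \<eta>) ` F. ball_weight L (Y / 4) (1-\<alpha>) \<zeta>)"
    using sum_reindex_diff[of "\<lambda>\<zeta>. 4 * Y powr (-\<alpha>) * ball_weight L (Y / 4) (1-\<alpha>) \<zeta>" \<eta> F]
    by (simp add: sum.distrib sum_distrib_left)
  also have "\<dots> \<le> 4 * Y powr (\<alpha>-1) * (16 / (1-\<alpha>)^2 / k * (4 * Y) powr (1-\<alpha>))
      + 4 * Y powr (-\<alpha>) * (16 / (1-(1-\<alpha>))^2 / k * (Y / 4) powr (1-(1-\<alpha>)))"
    unfolding k_def by (intro add_mono mult_left_mono sum_ball_weight_le) (use L \<alpha> Y F in auto)
  also have "\<dots> = 64 / ((1-\<alpha>)^2 * k) * (Y powr (-(1-\<alpha>)) * (4 * Y) powr (1-\<alpha>))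
      + 64 / (\<alpha>^2 * k) * (Y powr (-\<alpha>) * ((1/4) * Y) powr \<alpha>)"
    by (simp add: field_simps)
  also have "\<dots> = 64 / ((1-\<alpha>)^2 * k) * 4 powr (1-\<alpha>) + 64 / (\<alpha>^2 * k) * (1/4) powr \<alpha>"
    using Y by (simp only: powr_minus_mult_powr_scale)
  also have "\<dots> \<le> 64 / ((1-\<alpha>)^2 * k) * 4 powr 1 + 64 / (\<alpha>^2 * k) * 1"
    using \<alpha> k by (intro add_mono mult_left_mono powr_mono) (auto simp: powr_le1)
  finally show ?thesis by (simp add: k_def)
qed

lemma low_part_KA_sq_le:
  assumes L: "L > 0" and \<alpha>: "0 \<le> \<alpha>" "\<alpha> \<le> 2" and \<xi>: "\<xi> \<noteq> (0,0)"
  shows "(low_part L (KA L \<alpha>) \<xi> \<eta>)^2 \<le> 4 / ksq L \<xi> * ball_weight L (ksq L \<xi> / 4) 0 \<eta>"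
proof -
  define X Y Z where "X = ksq L \<xi>" and "Y = ksq L \<eta>" and "Z = ksq L (\<xi> - \<eta>)"
  have X: "X > 0" unfolding X_def using ksq_pos[OF L \<xi>] .
  have rhs: "4 / X * ball_weight L (X / 4) 0 \<eta> \<ge> 0"
    using X by (simp add: ball_weight_nonneg)
  consider "\<not> 4 * Y \<le> X" | "\<eta> = (0,0)" | "4 * Y \<le> X" "\<eta> \<noteq> (0,0)" by blast
  then show ?thesis
  proof cases
    case 1
    then show ?thesis using rhs by (simp add: low_part_def X_def Y_def)
  next
    case 2
    then show ?thesis using rhs by (simp add: low_part_def KA_def X_def)
  next
    case 3
    have Y: "Y > 0" unfolding Y_def using ksq_pos[OF L 3(2)] .
    note Z = ksq_diff_ge_quarter[OF L 3[unfolded X_def Y_def], folded X_def Z_def]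
    have "(low_part L (KA L \<alpha>) \<xi> \<eta>)^2 = X powr (-1-\<alpha>) * (kcross L (\<xi> - \<eta>) \<eta>)^2 * Z powr (\<alpha>-2)"
      using 3 by (simp add: low_part_def KA_sq X_def Y_def Z_def)
    also have "\<dots> \<le> 4 / X"
      using kcross_sq_le_ksq_ksq[of L \<xi> \<eta>] 3 X Y Z \<alpha>
      by (intro weightA_le_low) (simp_all add: X_def Y_def)
    also have "\<dots> = 4 / X * ball_weight L (X / 4) 0 \<eta>"
      using 3 Y by (simp add: ball_weight_def Y_def)
    finally show ?thesis by (simp add: X_def)
  qed
qed

lemma sum_low_part_KA_sq_le:
  assumes L: "L > 0" and \<alpha>: "0 \<le> \<alpha>" "\<alpha> \<le> 2" and G: "finite G"
  shows "(\<Sum>\<eta>\<in>G. (low_part L (KA L \<alpha>) \<xi> \<eta>)^2) \<le> 16 / ksq_min L"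
proof (cases "\<xi> = (0,0)")
  case True
  then show ?thesis using ksq_min_pos[OF L] by (simp add: low_part_def cong: if_cong)
next
  case False
  define X where "X = ksq L \<xi>"
  have X: "X > 0" unfolding X_def using ksq_pos[OF L False] .
  have "(\<Sum>\<eta>\<in>G. (low_part L (KA L \<alpha>) \<xi> \<eta>)^2) \<le> 4 / X * (\<Sum>\<eta>\<in>G. ball_weight L (X / 4) 0 \<eta>)"
    unfolding sum_distrib_left X_def by (intro sum_mono low_part_KA_sq_le) (use L \<alpha> False in auto)
  also have "\<dots> \<le> 4 / X * (16 / (1-0)^2 / ksq_min L * (X / 4) powr (1-0))"
    using X by (intro mult_left_mono sum_ball_weight_le) (use L G in auto)
  also have "\<dots> = 16 / ksq_min L"
    using X by simp
  finally show ?thesis .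
qed

lemma high_part_KB_sq_le:
  assumes L: "L > 0" and \<alpha>: "0 \<le> \<alpha>" "\<alpha> \<le> 1" and \<eta>: "\<eta> \<noteq> (0,0)"
  shows "(high_part L (KB L \<alpha>) \<xi> \<eta>)^2
    \<le> 16 * ksq L \<eta> powr (\<alpha>-2) * ball_weight L (4 * ksq L \<eta>) \<alpha> \<xi> + 4 * ksq L (\<xi> - \<eta>) powr (-2)"
    (is "_ \<le> ?f + ?g")
proof -
  define X Y Z where "X = ksq L \<xi>" and "Y = ksq L \<eta>" and "Z = ksq L (\<xi> - \<eta>)"
  have Y: "Y > 0" unfolding Y_def using ksq_pos[OF L \<eta>] .
  have f: "?f \<ge> 0" and g: "?g \<ge> 0" by (simp_all add: ball_weight_nonneg)
  have c: "(kcross L (\<xi> - \<eta>) \<eta>)^2 \<le> X * Z"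
    unfolding X_def Z_def by (rule kcross_sq_le_ksq_ksq_diff)
  consider "4 * Y \<le> X" | "X = 0 \<or> Z = 0" | "X < 4 * Y" "0 < X" "0 < Z"
    using ksq_nonneg[of L \<xi>] ksq_nonneg[of L "\<xi> - \<eta>"] unfolding X_def Z_def by fastforce
  then show ?thesis
  proof cases
    case 1
    then show ?thesis using f g by (simp add: high_part_def X_def Y_def)
  next
    case 2
    then show ?thesis using f g by (auto simp: high_part_def KB_sq X_def Z_def)
  next
    case 3
    then have KB: "(high_part L (KB L \<alpha>) \<xi> \<eta>)^2
        = X powr (-1-\<alpha>) * (kcross L (\<xi> - \<eta>) \<eta>)^2 * Z powr (-3) * Y powr \<alpha>"
      by (simp add: high_part_def KB_sq X_def Y_def Z_def)
    show ?thesis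
    proof (cases "Y / 4 \<le> Z")
      case True
      have "(high_part L (KB L \<alpha>) \<xi> \<eta>)^2 \<le> 16 * X powr (-\<alpha>) * Y powr (\<alpha>-2)"
        unfolding KB by (rule weightB_le_high) (use 3 Y True c in auto)
      also have "\<dots> = ?f"
        using 3 by (simp add: ball_weight_def X_def Y_def mult_ac)
      finally show ?thesis using g by linarith
    next
      case False
      then have "Y / 4 \<le> X"
        unfolding X_def Y_def Z_def by (intro ksq_quarter_le_of_small_diff) simp
      then have "(high_part L (KB L \<alpha>) \<xi> \<eta>)^2 \<le> 4 * Z powr (-2)"
        unfolding KB by (intro weightB_le_diag) (use 3 Y \<alpha> c in auto)
      then show ?thesis using f by (simp add: Z_def)
    qed
  qed
qed

lemma sum_high_part_KB_sq_le:
  assumes L: "L > 0" and \<alpha>: "0 \<le> \<alpha>" "\<alpha> < 1" and F: "finite F"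
  shows "(\<Sum>\<xi>\<in>F. (high_part L (KB L \<alpha>) \<xi> \<eta>)^2) \<le> 1024 / ((1-\<alpha>)^2 * (ksq_min L)^2) + 576 / (ksq_min L)^2"
proof (cases "\<eta> = (0,0)")
  case True
  have "0 \<le> 1024 / ((1-\<alpha>)^2 * (ksq_min L)^2) + 576 / (ksq_min L)^2"
    by (intro add_nonneg_nonneg divide_nonneg_nonneg) auto
  with True show ?thesis by (simp add: high_part_def ksq_nonneg)
next
  case False
  define Y k where "Y = ksq L \<eta>" and "k = ksq_min L"
  have Y: "Y > 0" and k: "k > 0" and Yk: "k \<le> Y"
    unfolding Y_def k_def using ksq_pos[OF L False] ksq_min_pos[OF L] ksq_ge_ksq_min[OF L False] .
  have "(\<Sum>\<xi>\<in>F. (high_part L (KB L \<alpha>) \<xi> \<eta>)^2)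
      \<le> (\<Sum>\<xi>\<in>F. 16 * Y powr (\<alpha>-2) * ball_weight L (4 * Y) \<alpha> \<xi> + 4 * ksq L (\<xi> - \<eta>) powr (-2))"
    unfolding Y_def by (intro sum_mono high_part_KB_sq_le) (use L \<alpha> False in auto)
  also have "\<dots> = 16 * Y powr (\<alpha>-2) * (\<Sum>\<xi>\<in>F. ball_weight L (4 * Y) \<alpha> \<xi>)
      + 4 * (\<Sum>\<zeta>\<in>(\<lambda>\<xi>. \<xi> - \<eta>) ` F. ksq L \<zeta> powr (-2))"
    using sum_reindex_diff[of "\<lambda>\<zeta>. 4 * ksq L \<zeta> powr (-2)" \<eta> F]
    by (simp add: sum.distrib sum_distrib_left)
  also have "\<dots> \<le> 16 * Y powr (\<alpha>-2) * (16 / (1-\<alpha>)^2 / k * (4 * Y) powr (1-\<alpha>)) + 4 * (144 / k^2)"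
    unfolding k_def by (intro add_mono mult_left_mono sum_ball_weight_le sum_ksq_powr_minus_two_le)
      (use L \<alpha> Y F in auto)
  also have "\<dots> = 256 / ((1-\<alpha>)^2 * k) * (Y powr (\<alpha>-2) * (4 * Y) powr (1-\<alpha>)) + 576 / k^2"
    by (simp add: field_simps)
  also have "Y powr (\<alpha>-2) * (4 * Y) powr (1-\<alpha>) = 4 powr (1-\<alpha>) * (1 / Y)"
  proof -
    have "Y powr (\<alpha>-2) * (4 * Y) powr (1-\<alpha>) = 4 powr (1-\<alpha>) * (Y powr (\<alpha>-2) * Y powr (1-\<alpha>))"
      by (simp add: powr_mult mult_ac)
    also have "Y powr (\<alpha>-2) * Y powr (1-\<alpha>) = Y powr (-1)"
      by (simp add: powr_add[symmetric])
    also have "Y powr (-1) = 1 / Y"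
      using Y by (simp add: powr_minus_divide)
    finally show ?thesis .
  qed
  also have "256 / ((1-\<alpha>)^2 * k) * (4 powr (1-\<alpha>) * (1 / Y)) + 576 / k^2
      \<le> 256 / ((1-\<alpha>)^2 * k) * (4 powr 1 * (1 / k)) + 576 / k^2"
    using \<alpha> k Y Yk by (intro add_mono mult_mono mult_left_mono powr_mono) (auto simp: divide_simps)
  finally show ?thesis by (simp add: k_def power2_eq_square)
qed

lemma low_part_KB_sq_le:
  assumes L: "L > 0" and \<alpha>: "0 \<le> \<alpha>" and \<xi>: "\<xi> \<noteq> (0,0)"
  shows "(low_part L (KB L \<alpha>) \<xi> \<eta>)^2 \<le> 64 * ksq L \<xi> powr (-2) * ball_weight L (ksq L \<xi> / 4) 0 \<eta>"
proof -
  define X Y Z where "X = ksq L \<xi>" and "Y = ksq L \<eta>" and "Z = ksq L (\<xi> - \<eta>)"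
  have X: "X > 0" unfolding X_def using ksq_pos[OF L \<xi>] .
  have rhs: "64 * X powr (-2) * ball_weight L (X / 4) 0 \<eta> \<ge> 0"
    by (simp add: ball_weight_nonneg)
  consider "\<not> 4 * Y \<le> X" | "\<eta> = (0,0)" | "4 * Y \<le> X" "\<eta> \<noteq> (0,0)" by blast
  then show ?thesis
  proof cases
    case 1
    then show ?thesis using rhs by (simp add: low_part_def X_def Y_def)
  next
    case 2
    then show ?thesis using rhs by (simp add: low_part_def KB_def X_def)
  next
    case 3
    have Y: "Y > 0" unfolding Y_def using ksq_pos[OF L 3(2)] .
    note Z = ksq_diff_ge_quarter[OF L 3[unfolded X_def Y_def], folded X_def Z_def]
    have "(low_part L (KB L \<alpha>) \<xi> \<eta>)^2 = X powr (-1-\<alpha>) * (kcross L (\<xi> - \<eta>) \<eta>)^2 * Z powr (-3) * Y powr \<alpha>"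
      using 3 by (simp add: low_part_def KB_sq X_def Y_def Z_def)
    also have "\<dots> \<le> 64 * X powr (-2)"
      using kcross_sq_le_ksq_ksq[of L \<xi> \<eta>] 3 X Y Z \<alpha>
      by (intro weightB_le_low) (simp_all add: X_def Y_def)
    also have "\<dots> = 64 * X powr (-2) * ball_weight L (X / 4) 0 \<eta>"
      using 3 Y by (simp add: ball_weight_def Y_def)
    finally show ?thesis by (simp add: X_def)
  qed
qed

lemma sum_low_part_KB_sq_le:
  assumes L: "L > 0" and \<alpha>: "0 \<le> \<alpha>" and G: "finite G"
  shows "(\<Sum>\<eta>\<in>G. (low_part L (KB L \<alpha>) \<xi> \<eta>)^2) \<le> 256 / (ksq_min L)^2"
proof (cases "\<xi> = (0,0)")
  case True
  then show ?thesis by (simp add: low_part_def cong: if_cong)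
next
  case False
  define X k where "X = ksq L \<xi>" and "k = ksq_min L"
  have X: "X > 0" and k: "k > 0" and Xk: "k \<le> X"
    unfolding X_def k_def using ksq_pos[OF L False] ksq_min_pos[OF L] ksq_ge_ksq_min[OF L False] .
  have "(\<Sum>\<eta>\<in>G. (low_part L (KB L \<alpha>) \<xi> \<eta>)^2) \<le> 64 * X powr (-2) * (\<Sum>\<eta>\<in>G. ball_weight L (X / 4) 0 \<eta>)"
    unfolding sum_distrib_left X_def by (intro sum_mono low_part_KB_sq_le) (use L \<alpha> False in auto)
  also have "\<dots> \<le> 64 * X powr (-2) * (16 / (1-0)^2 / k * (X / 4) powr (1-0))"
    unfolding k_def using X by (intro mult_left_mono sum_ball_weight_le) (use L G in auto)
  also have "\<dots> = 256 / k * (1 / X)"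
    using X by (simp add: powr_minus_divide field_simps power2_eq_square)
  also have "\<dots> \<le> 256 / k * (1 / k)"
    using X k Xk by (intro mult_left_mono) (auto simp: divide_simps)
  finally show ?thesis by (simp add: k_def power2_eq_square)
qed

definition KA_const :: "real \<Rightarrow> real \<Rightarrow> real" where
  "KA_const L \<alpha> = 256 / ((1-\<alpha>)^2 * ksq_min L) + 64 / (\<alpha>^2 * ksq_min L) + 16 / ksq_min L"

definition KB_const :: "real \<Rightarrow> real \<Rightarrow> real" where
  "KB_const L \<alpha> = 1024 / ((1-\<alpha>)^2 * (ksq_min L)^2) + 576 / (ksq_min L)^2 + 256 / (ksq_min L)^2"

lemma KA_const_nonneg: "L > 0 \<Longrightarrow> KA_const L \<alpha> \<ge> 0"
  using ksq_min_pos[of L] by (simp add: KA_const_def)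

lemma KB_const_nonneg: "L > 0 \<Longrightarrow> KB_const L \<alpha> \<ge> 0"
  by (simp add: KB_const_def)

lemma
  fixes u v :: "int \<times> int \<Rightarrow> real"
  assumes L: "L > 0" and \<alpha>: "0 < \<alpha>" "\<alpha> < 1"
    and u: "(\<lambda>\<zeta>. (u \<zeta>)^2) summable_on UNIV" and v: "(\<lambda>\<eta>. (v \<eta>)^2) summable_on UNIV"
  shows KA_convolution_summable: "(\<lambda>\<eta>. KA L \<alpha> \<xi> \<eta> * u (\<xi> - \<eta>) * v \<eta>) summable_on UNIV"
    and KA_convolution_square_summable: "(\<lambda>\<xi>. (\<Sum>\<^sub>\<infinity>\<eta>. KA L \<alpha> \<xi> \<eta> * u (\<xi> - \<eta>) * v \<eta>)^2) summable_on UNIV"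
    and KA_convolution_square_sum_le: "(\<Sum>\<^sub>\<infinity>\<xi>. (\<Sum>\<^sub>\<infinity>\<eta>. KA L \<alpha> \<xi> \<eta> * u (\<xi> - \<eta>) * v \<eta>)^2)
      \<le> 2 * KA_const L \<alpha> * (\<Sum>\<^sub>\<infinity>\<zeta>. (u \<zeta>)^2) * (\<Sum>\<^sub>\<infinity>\<eta>. (v \<eta>)^2)"
  using convolution_square_sum_le[where Kc = "high_part L (KA L \<alpha>)" and Kr = "low_part L (KA L \<alpha>)",
      OF u v sum_high_part_KA_sq_le[OF L \<alpha>] sum_low_part_KA_sq_le[OF L]] \<alpha>
  unfolding high_part_add_low_part KA_const_def by auto

lemma
  fixes u v :: "int \<times> int \<Rightarrow> real"
  assumes L: "L > 0" and \<alpha>: "0 < \<alpha>" "\<alpha> < 1"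
    and u: "(\<lambda>\<zeta>. (u \<zeta>)^2) summable_on UNIV" and v: "(\<lambda>\<eta>. (v \<eta>)^2) summable_on UNIV"
  shows KB_convolution_summable: "(\<lambda>\<eta>. KB L \<alpha> \<xi> \<eta> * u (\<xi> - \<eta>) * v \<eta>) summable_on UNIV"
    and KB_convolution_square_summable: "(\<lambda>\<xi>. (\<Sum>\<^sub>\<infinity>\<eta>. KB L \<alpha> \<xi> \<eta> * u (\<xi> - \<eta>) * v \<eta>)^2) summable_on UNIV"
    and KB_convolution_square_sum_le: "(\<Sum>\<^sub>\<infinity>\<xi>. (\<Sum>\<^sub>\<infinity>\<eta>. KB L \<alpha> \<xi> \<eta> * u (\<xi> - \<eta>) * v \<eta>)^2)
      \<le> 2 * KB_const L \<alpha> * (\<Sum>\<^sub>\<infinity>\<zeta>. (u \<zeta>)^2) * (\<Sum>\<^sub>\<infinity>\<eta>. (v \<eta>)^2)"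
  using convolution_square_sum_le[where Kc = "high_part L (KB L \<alpha>)" and Kr = "low_part L (KB L \<alpha>)",
      OF u v sum_high_part_KB_sq_le[OF L] sum_low_part_KB_sq_le[OF L]] \<alpha>
  unfolding high_part_add_low_part KB_const_def by auto

section \<open>The nonlinearity on Fourier coefficients\<close>

lemma jac_eq: "jac L \<psi> q \<xi> = (\<Sum>\<^sub>\<infinity>\<eta>. of_real (kcross L (\<xi> - \<eta>) \<eta>) * \<psi> (\<xi> - \<eta>) * q \<eta>)"
proof -
  have diff: "(fst \<xi> - fst \<eta>, snd \<xi> - snd \<eta>) = \<xi> - \<eta>" for \<eta> :: "int \<times> int"
    by (simp add: prod_eq_iff)
  show ?thesis
    unfolding jac_def Let_def diff by (simp add: kcross_def algebra_simps)
qed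

lemma jac_zero [simp]: "jac L \<psi> q (0,0) = 0"
proof -
  have "kcross L ((0,0) - \<eta>) \<eta> = 0" for \<eta>
    by (simp add: kcross_diff_left kcross_def kx_def ky_def)
  then show ?thesis by (simp add: jac_eq)
qed

definition hermitian :: "sfield \<Rightarrow> bool" where
  "hermitian c \<longleftrightarrow> (\<forall>\<xi>. c (- \<xi>) = cnj (c \<xi>))"

lemma hermitian_iff: "hermitian c \<longleftrightarrow> (\<forall>a b. c (-a, -b) = cnj (c (a, b)))"
  by (simp add: hermitian_def)

lemma hermitian_diff: "hermitian f \<Longrightarrow> hermitian g \<Longrightarrow> hermitian (\<lambda>\<xi>. f \<xi> - g \<xi>)"
  by (simp add: hermitian_def)

lemma hermitian_uminus: "hermitian f \<Longrightarrow> hermitian (\<lambda>\<xi>. - f \<xi>)"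
  by (simp add: hermitian_def)

lemma kcross_uminus [simp]: "kcross L (- \<zeta>) (- \<eta>) = kcross L \<zeta> \<eta>"
  by (simp add: kcross_def kx_def ky_def)

lemma jac_hermitian:
  assumes "hermitian \<psi>" "hermitian q"
  shows "hermitian (jac L \<psi> q)"
  unfolding hermitian_def
proof
  fix \<xi>
  have neg: "- \<xi> - - \<eta> = - (\<xi> - \<eta>)" for \<eta> :: "int \<times> int"
    by simp
  have h\<psi>: "\<psi> (- \<zeta>) = cnj (\<psi> \<zeta>)" and hq: "q (- \<zeta>) = cnj (q \<zeta>)" for \<zeta>
    using assms unfolding hermitian_def by blast+
  have "jac L \<psi> q (- \<xi>) = (\<Sum>\<^sub>\<infinity>\<eta>. of_real (kcross L (- \<xi> - - \<eta>) (- \<eta>)) * \<psi> (- \<xi> - - \<eta>) * q (- \<eta>))"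
    unfolding jac_eq by (rule infsum_reindex_bij_betw[OF bij_uminus, symmetric])
  also have "\<dots> = (\<Sum>\<^sub>\<infinity>\<eta>. cnj (of_real (kcross L (\<xi> - \<eta>) \<eta>) * \<psi> (\<xi> - \<eta>) * q \<eta>))"
    unfolding neg by (intro infsum_cong) (simp only: h\<psi> hq kcross_uminus complex_cnj_mult complex_cnj_complex_of_real)
  also have "\<dots> = cnj (jac L \<psi> q \<xi>)"
    unfolding jac_eq by (rule infsum_cnj)
  finally show "jac L \<psi> q (- \<xi>) = cnj (jac L \<psi> q \<xi>)" .
qed

lemma jac_summand_summable_weighted_le:
  fixes \<phi> v :: sfield and T :: "int \<times> int \<Rightarrow> real"
  assumes W: "W > 0" and T: "T summable_on UNIV"
    and le: "\<And>\<eta>. W * (\<bar>kcross L (\<xi> - \<eta>) \<eta>\<bar> * cmod (\<phi> (\<xi> - \<eta>)) * cmod (v \<eta>)) \<le> T \<eta>"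
  shows "(\<lambda>\<eta>. of_real (kcross L (\<xi> - \<eta>) \<eta>) * \<phi> (\<xi> - \<eta>) * v \<eta>) summable_on UNIV"
    and "W * cmod (jac L \<phi> v \<xi>) \<le> (\<Sum>\<^sub>\<infinity>\<eta>. T \<eta>)"
proof -
  define F where "F \<eta> = of_real (kcross L (\<xi> - \<eta>) \<eta>) * \<phi> (\<xi> - \<eta>) * v \<eta>" for \<eta>
  have nF: "norm (F \<eta>) \<le> T \<eta> * (1 / W)" for \<eta>
    using le[of \<eta>] W by (simp add: F_def norm_mult field_simps)
  have sF: "(\<lambda>\<eta>. norm (F \<eta>)) summable_on UNIV"
    by (rule summable_on_comparison_test[OF summable_on_cmult_left[OF T] nF]) simp
  then show "(\<lambda>\<eta>. of_real (kcross L (\<xi> - \<eta>) \<eta>) * \<phi> (\<xi> - \<eta>) * v \<eta>) summable_on UNIV"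
    unfolding F_def by (rule abs_summable_summable)
  have "cmod (jac L \<phi> v \<xi>) \<le> (\<Sum>\<^sub>\<infinity>\<eta>. norm (F \<eta>))"
    unfolding jac_eq F_def[symmetric] by (rule norm_infsum_bound[OF sF])
  also have "\<dots> \<le> (\<Sum>\<^sub>\<infinity>\<eta>. T \<eta> * (1 / W))"
    by (rule infsum_mono[OF sF summable_on_cmult_left[OF T] nF])
  also have "\<dots> = (\<Sum>\<^sub>\<infinity>\<eta>. T \<eta>) * (1 / W)"
    by (rule infsum_cmult_left')
  finally show "W * cmod (jac L \<phi> v \<xi>) \<le> (\<Sum>\<^sub>\<infinity>\<eta>. T \<eta>)"
    using W by (simp add: field_simps)
qed

lemma jac_diff_eq:
  assumes "\<And>\<zeta>. \<psi> \<zeta> - \<psi>b \<zeta> = \<psi>d \<zeta>" and "\<And>\<eta>. q \<eta> - qb \<eta> = d \<eta>"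
    and "(\<lambda>\<eta>. of_real (kcross L (\<xi> - \<eta>) \<eta>) * \<psi> (\<xi> - \<eta>) * q \<eta>) summable_on UNIV"
    and "(\<lambda>\<eta>. of_real (kcross L (\<xi> - \<eta>) \<eta>) * \<psi>b (\<xi> - \<eta>) * qb \<eta>) summable_on UNIV"
    and "(\<lambda>\<eta>. of_real (kcross L (\<xi> - \<eta>) \<eta>) * \<psi>d (\<xi> - \<eta>) * q \<eta>) summable_on UNIV"
    and "(\<lambda>\<eta>. of_real (kcross L (\<xi> - \<eta>) \<eta>) * \<psi>b (\<xi> - \<eta>) * d \<eta>) summable_on UNIV"
  shows "jac L \<psi> q \<xi> - jac L \<psi>b qb \<xi> = jac L \<psi>d q \<xi> + jac L \<psi>b d \<xi>"
proof -
  have split: "of_real (kcross L (\<xi> - \<eta>) \<eta>) * \<psi> (\<xi> - \<eta>) * q \<eta>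
      = of_real (kcross L (\<xi> - \<eta>) \<eta>) * \<psi>d (\<xi> - \<eta>) * q \<eta> + of_real (kcross L (\<xi> - \<eta>) \<eta>) * \<psi>b (\<xi> - \<eta>) * d \<eta>
        + of_real (kcross L (\<xi> - \<eta>) \<eta>) * \<psi>b (\<xi> - \<eta>) * qb \<eta>" for \<eta>
    by (simp add: assms(1,2)[symmetric] algebra_simps)
  have "jac L \<psi> q \<xi> = jac L \<psi>d q \<xi> + jac L \<psi>b d \<xi> + jac L \<psi>b qb \<xi>"
    unfolding jac_eq split using assms(3-6) by (simp add: infsum_add summable_on_add)
  then show ?thesis by simp
qed

lemma weighted_jac_diff_le:
  fixes \<psi> \<psi>b \<psi>d q qb d :: sfield and Tq Tb TA TB :: "int \<times> int \<Rightarrow> real"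
  assumes W: "W > 0"
    and lin: "\<And>\<zeta>. \<psi> \<zeta> - \<psi>b \<zeta> = \<psi>d \<zeta>" "\<And>\<eta>. q \<eta> - qb \<eta> = d \<eta>"
    and T: "Tq summable_on UNIV" "Tb summable_on UNIV" "TA summable_on UNIV" "TB summable_on UNIV"
    and le: "\<And>\<eta>. W * (\<bar>kcross L (\<xi> - \<eta>) \<eta>\<bar> * cmod (\<psi> (\<xi> - \<eta>)) * cmod (q \<eta>)) \<le> Tq \<eta>"
      "\<And>\<eta>. W * (\<bar>kcross L (\<xi> - \<eta>) \<eta>\<bar> * cmod (\<psi>b (\<xi> - \<eta>)) * cmod (qb \<eta>)) \<le> Tb \<eta>"
      "\<And>\<eta>. W * (\<bar>kcross L (\<xi> - \<eta>) \<eta>\<bar> * cmod (\<psi>d (\<xi> - \<eta>)) * cmod (q \<eta>)) \<le> TA \<eta>"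
      "\<And>\<eta>. W * (\<bar>kcross L (\<xi> - \<eta>) \<eta>\<bar> * cmod (\<psi>b (\<xi> - \<eta>)) * cmod (d \<eta>)) \<le> TB \<eta>"
  shows "W * cmod (jac L \<psi> q \<xi> - jac L \<psi>b qb \<xi>) \<le> (\<Sum>\<^sub>\<infinity>\<eta>. TA \<eta>) + (\<Sum>\<^sub>\<infinity>\<eta>. TB \<eta>)"
proof -
  note J = jac_summand_summable_weighted_le[OF W]
  have "jac L \<psi> q \<xi> - jac L \<psi>b qb \<xi> = jac L \<psi>d q \<xi> + jac L \<psi>b d \<xi>"
    by (rule jac_diff_eq[OF lin J(1)[OF T(1) le(1)] J(1)[OF T(2) le(2)] J(1)[OF T(3) le(3)] J(1)[OF T(4) le(4)]])
  then have "W * cmod (jac L \<psi> q \<xi> - jac L \<psi>b qb \<xi>) \<le> W * cmod (jac L \<psi>d q \<xi>) + W * cmod (jac L \<psi>b d \<xi>)"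
    using W norm_triangle_ineq[of "jac L \<psi>d q \<xi>" "jac L \<psi>b d \<xi>"]
    by (simp add: distrib_left[symmetric] mult_left_mono)
  also have "\<dots> \<le> (\<Sum>\<^sub>\<infinity>\<eta>. TA \<eta>) + (\<Sum>\<^sub>\<infinity>\<eta>. TB \<eta>)"
    by (intro add_mono J(2)[OF T(3) le(3)] J(2)[OF T(4) le(4)])
  finally show ?thesis .
qed

lemma symdet_eq: "symdet L S1 S2 \<xi> = ksq L \<xi> * (ksq L \<xi> + S1 + S2)"
  by (simp add: symdet_def algebra_simps)

lemma norm_combination_div_le:
  fixes A B w S :: real and x y :: complex
  assumes "0 < w" "0 \<le> A" "A \<le> w + S" "0 \<le> B" "B \<le> w + S" "0 \<le> S"
  shows "cmod ((of_real A * x + of_real B * y) / of_real (w * (w + S))) \<le> (cmod x + cmod y) / w"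
proof -
  have "cmod (of_real A * x + of_real B * y) \<le> A * cmod x + B * cmod y"
    using norm_triangle_ineq[of "of_real A * x" "of_real B * y"] assms by (simp add: norm_mult)
  also have "\<dots> \<le> (w + S) * (cmod x + cmod y)"
    using assms by (simp add: distrib_left add_mono mult_right_mono)
  finally have "cmod (of_real A * x + of_real B * y) / (w * (w + S)) \<le> (w + S) * (cmod x + cmod y) / (w * (w + S))"
    using assms by (intro divide_right_mono) auto
  also have "\<dots> = (cmod x + cmod y) / w"
    using assms by (simp add: mult.commute[of w])
  moreover have "cmod (complex_of_real (w * (w + S))) = w * (w + S)"
    using assms by (simp only: norm_of_real) simp
  ultimately show ?thesis
    by (simp only: norm_divide)
qed

lemma invop_norm_le:
  assumes L: "L > 0" and S: "S1 > 0" "S2 > 0" and \<zeta>: "\<zeta> \<noteq> (0,0)" and sel: "sel \<in> {fst, snd}"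
  shows "cmod (sel (invop L S1 S2 q) \<zeta>) \<le> (cmod (fst q \<zeta>) + cmod (snd q \<zeta>)) / ksq L \<zeta>"
proof -
  note bound = norm_combination_div_le[OF ksq_pos[OF L \<zeta>], of _ "S1 + S2"]
  show ?thesis
    using sel bound[of "ksq L \<zeta> + S2" S1 "fst q \<zeta>" "snd q \<zeta>"] bound[of S2 "ksq L \<zeta> + S1" "fst q \<zeta>" "snd q \<zeta>"] S \<zeta>
    by (auto simp: invop_def symdet_eq add_ac ksq_nonneg)
qed

lemma diff_divide_lincomb:
  fixes A B D x y x' y' :: complex
  shows "(A * x + B * y) / D - (A * x' + B * y') / D = (A * (x - x') + B * (y - y')) / D"
  by (simp add: diff_divide_distrib[symmetric] algebra_simps)

lemma invop_diff:
  assumes "sel \<in> {fst, snd}"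
  shows "sel (invop L S1 S2 q) \<zeta> - sel (invop L S1 S2 p) \<zeta> = sel (invop L S1 S2 (vdiff q p)) \<zeta>"
  using assms by (auto simp: invop_def vdiff_def diff_divide_lincomb)

lemma invop_hermitian:
  assumes "hermitian (fst q)" "hermitian (snd q)" "sel \<in> {fst, snd}"
  shows "hermitian (sel (invop L S1 S2 q))"
proof -
  have k: "ksq L (-a, -b) = ksq L (a, b)" and d: "symdet L S1 S2 (-a, -b) = symdet L S1 S2 (a, b)" for a b
    by (simp_all add: ksq_def kx_def ky_def symdet_def)
  show ?thesis
    using assms unfolding hermitian_iff by (auto simp: invop_def k d)
qed

section \<open>Sobolev weights and the estimate\<close>

text \<open>As \<open>0 powr s = 0\<close> for every \<open>s\<close>, even \<open>hweight L 0\<close> vanishes at the zero mode, matching \<open>Hnorm2\<close>.\<close>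
definition hweight :: "real \<Rightarrow> real \<Rightarrow> int \<times> int \<Rightarrow> real" where
  "hweight L s \<xi> = sqrt (ksq L \<xi> powr s)"

lemma hweight_nonneg: "hweight L s \<xi> \<ge> 0"
  by (simp add: hweight_def)

lemma hweight_pos: "L > 0 \<Longrightarrow> \<xi> \<noteq> (0,0) \<Longrightarrow> hweight L s \<xi> > 0"
  using ksq_pos[of L \<xi>] by (simp add: hweight_def)

lemma hweight_mult_sq: "(hweight L s \<xi> * a)^2 = ksq L \<xi> powr s * a^2"
  by (simp add: hweight_def power_mult_distrib)

lemma hweight_zero [simp]: "hweight L s (0,0) = 0"
  by (simp add: hweight_def)

lemma
  fixes c :: sfield
  shows summable_on_Hnorm2_iff: "(\<lambda>\<xi>. ksq L \<xi> powr s * (cmod (c \<xi>))^2) summable_on (UNIV - {(0,0)})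
      \<longleftrightarrow> (\<lambda>\<xi>. (hweight L s \<xi> * cmod (c \<xi>))^2) summable_on UNIV"
    and Hnorm2_eq_infsum: "Hnorm2 L s c = (\<Sum>\<^sub>\<infinity>\<xi>. (hweight L s \<xi> * cmod (c \<xi>))^2)"
  unfolding hweight_mult_sq Hnorm2_def
  by (rule summable_on_cong_neutral infsum_cong_neutral; auto)+

lemma inH_iff:
  "inH L s c \<longleftrightarrow> c (0,0) = 0 \<and> hermitian c \<and> (\<lambda>\<xi>. (hweight L s \<xi> * cmod (c \<xi>))^2) summable_on UNIV"
  by (simp add: inH_def hermitian_iff summable_on_Hnorm2_iff)

lemma hweight_summable_mono:
  assumes L: "L > 0" and "s \<le> t" and sum: "(\<lambda>\<xi>. (hweight L t \<xi> * A \<xi>)^2) summable_on UNIV"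
  shows "(\<lambda>\<xi>. (hweight L s \<xi> * A \<xi>)^2) summable_on UNIV"
proof (rule summable_on_comparison_test[OF summable_on_cmult_right[OF sum, of "ksq_min L powr (s - t)"]])
  fix \<xi>
  show "(hweight L s \<xi> * A \<xi>)^2 \<le> ksq_min L powr (s - t) * (hweight L t \<xi> * A \<xi>)^2"
  proof (cases "\<xi> = (0,0)")
    case False
    have "ksq L \<xi> powr s = ksq L \<xi> powr (s - t) * ksq L \<xi> powr t"
      by (simp add: powr_add[symmetric])
    also have "\<dots> \<le> ksq_min L powr (s - t) * ksq L \<xi> powr t"
      using assms ksq_min_pos[OF L] ksq_ge_ksq_min[OF L False]
      by (intro mult_right_mono powr_mono2') auto
    finally show ?thesis
      unfolding hweight_mult_sq mult.assoc[symmetric] by (rule mult_right_mono) simp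
  qed simp
qed simp

lemma inH_mono:
  assumes "L > 0" "s \<le> t" "inH L t c"
  shows "inH L s c"
  using assms hweight_summable_mono[of L s t "\<lambda>\<xi>. cmod (c \<xi>)"] by (simp add: inH_iff)

lemma inH_diff:
  assumes "inH L s f" "inH L s g"
  shows "inH L s (\<lambda>\<xi>. f \<xi> - g \<xi>)"
  using assms weighted_square_summable_diff[of "hweight L s" f g] by (simp add: inH_iff hermitian_diff hweight_nonneg)

lemma inHv_mono: "L > 0 \<Longrightarrow> s \<le> t \<Longrightarrow> inHv L t v \<Longrightarrow> inHv L s v"
  by (simp add: inHv_def inH_mono)

lemma inHv_vdiff: "inHv L s v \<Longrightarrow> inHv L s w \<Longrightarrow> inHv L s (vdiff v w)"
  by (simp add: inHv_def vdiff_def inH_diff)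

lemma inHv_component:
  assumes "inHv L s v" "sel \<in> {fst, snd}"
  shows "sel v (0,0) = 0" "hermitian (sel v)" "(\<lambda>\<xi>. (hweight L s \<xi> * cmod (sel v \<xi>))^2) summable_on UNIV"
  using assms by (auto simp: inHv_def inH_iff)

lemma Hvnorm_sq: "(Hvnorm L s v)^2 = Hnorm2 L s (fst v) + Hnorm2 L s (snd v)"
proof -
  have "Hnorm2 L s c \<ge> 0" for c
    unfolding Hnorm2_def by (rule infsum_nonneg) simp
  then show ?thesis by (simp add: Hvnorm_def add_nonneg_nonneg)
qed

lemma sum_hweight_norms_le:
  assumes "inHv L s v"
  shows "(\<lambda>\<zeta>. (hweight L s \<zeta> * (cmod (fst v \<zeta>) + cmod (snd v \<zeta>)))^2) summable_on UNIV"
    and "(\<Sum>\<^sub>\<infinity>\<zeta>. (hweight L s \<zeta> * (cmod (fst v \<zeta>) + cmod (snd v \<zeta>)))^2) \<le> 2 * (Hvnorm L s v)^2"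
  using weighted_square_summable_add[of "hweight L s" "\<lambda>\<zeta>. cmod (fst v \<zeta>)" "\<lambda>\<zeta>. cmod (snd v \<zeta>)"]
    inHv_component(3)[OF assms, of fst] inHv_component(3)[OF assms, of snd]
  by (simp_all add: Hvnorm_sq Hnorm2_eq_infsum distrib_left)

lemma sqrt_powr_minus_two: "0 < Z \<Longrightarrow> sqrt (Z powr (-2)) = 1 / Z"
  for Z :: real
  by (simp add: powr_minus_divide power_one_over[symmetric] real_sqrt_divide)

lemma KA_pointwise_le:
  assumes L: "L > 0" and A: "\<And>\<zeta>. A \<zeta> \<ge> 0" and \<phi>: "\<And>\<zeta>. \<zeta> \<noteq> (0,0) \<Longrightarrow> cmod (\<phi> \<zeta>) \<le> A \<zeta> / ksq L \<zeta>"
  shows "hweight L (-1-\<alpha>) \<xi> * (\<bar>kcross L (\<xi> - \<eta>) \<eta>\<bar> * cmod (\<phi> (\<xi> - \<eta>)) * cmod (v \<eta>))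
    \<le> KA L \<alpha> \<xi> \<eta> * (hweight L (-\<alpha>) (\<xi> - \<eta>) * A (\<xi> - \<eta>)) * (hweight L 0 \<eta> * cmod (v \<eta>))"
proof (cases "\<eta> = (0,0) \<or> \<xi> - \<eta> = (0,0)")
  case True
  then have "kcross L (\<xi> - \<eta>) \<eta> = 0" by auto
  then show ?thesis using A by (simp add: KA_nonneg hweight_nonneg)
next
  case False
  define Z c where "Z = ksq L (\<xi> - \<eta>)" and "c = kcross L (\<xi> - \<eta>) \<eta>"
  have Z: "Z > 0" unfolding Z_def using ksq_pos[OF L] False by auto
  have h0: "hweight L 0 \<eta> = 1"
    using ksq_pos[OF L, of \<eta>] False by (simp add: hweight_def)
  have K: "KA L \<alpha> \<xi> \<eta> = hweight L (-1-\<alpha>) \<xi> * \<bar>c\<bar> * sqrt (Z powr (\<alpha>-2))"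
    by (simp add: KA_def hweight_def real_sqrt_mult Z_def c_def)
  have h: "sqrt (Z powr (\<alpha>-2)) * hweight L (-\<alpha>) (\<xi> - \<eta>) = 1 / Z"
    using Z sqrt_powr_minus_two[OF Z]
    by (simp add: hweight_def Z_def[symmetric] real_sqrt_mult[symmetric] powr_add[symmetric])
  have "hweight L (-1-\<alpha>) \<xi> * (\<bar>c\<bar> * cmod (\<phi> (\<xi> - \<eta>)) * cmod (v \<eta>))
      \<le> hweight L (-1-\<alpha>) \<xi> * (\<bar>c\<bar> * (A (\<xi> - \<eta>) / Z) * cmod (v \<eta>))"
    using \<phi>[of "\<xi> - \<eta>"] False
    by (intro mult_left_mono mult_right_mono) (simp_all add: Z_def hweight_nonneg)
  also have "\<dots> = hweight L (-1-\<alpha>) \<xi> * \<bar>c\<bar> * (sqrt (Z powr (\<alpha>-2)) * hweight L (-\<alpha>) (\<xi> - \<eta>))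
      * A (\<xi> - \<eta>) * cmod (v \<eta>)"
    unfolding h by simp
  also have "\<dots> = KA L \<alpha> \<xi> \<eta> * (hweight L (-\<alpha>) (\<xi> - \<eta>) * A (\<xi> - \<eta>)) * (hweight L 0 \<eta> * cmod (v \<eta>))"
    unfolding K h0 by (simp only: mult_ac mult_1_left)
  finally show ?thesis by (simp only: c_def)
qed

lemma KB_pointwise_le:
  assumes L: "L > 0" and A: "\<And>\<zeta>. A \<zeta> \<ge> 0" and \<phi>: "\<And>\<zeta>. \<zeta> \<noteq> (0,0) \<Longrightarrow> cmod (\<phi> \<zeta>) \<le> A \<zeta> / ksq L \<zeta>"
  shows "hweight L (-1-\<alpha>) \<xi> * (\<bar>kcross L (\<xi> - \<eta>) \<eta>\<bar> * cmod (\<phi> (\<xi> - \<eta>)) * cmod (v \<eta>))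
    \<le> KB L \<alpha> \<xi> \<eta> * (hweight L 1 (\<xi> - \<eta>) * A (\<xi> - \<eta>)) * (hweight L (-\<alpha>) \<eta> * cmod (v \<eta>))"
proof (cases "\<eta> = (0,0) \<or> \<xi> - \<eta> = (0,0)")
  case True
  then have "kcross L (\<xi> - \<eta>) \<eta> = 0" by auto
  then show ?thesis using A by (simp add: KB_nonneg hweight_nonneg)
next
  case False
  define Y Z c where "Y = ksq L \<eta>" and "Z = ksq L (\<xi> - \<eta>)" and "c = kcross L (\<xi> - \<eta>) \<eta>"
  have Y: "Y > 0" and Z: "Z > 0" unfolding Y_def Z_def using ksq_pos[OF L] False by auto
  have K: "KB L \<alpha> \<xi> \<eta> = hweight L (-1-\<alpha>) \<xi> * \<bar>c\<bar> * sqrt (Z powr (-3)) * sqrt (Y powr \<alpha>)"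
    by (simp add: KB_def hweight_def real_sqrt_mult Y_def Z_def c_def)
  have "Z powr (-3) * Z powr 1 = Z powr (-2)"
    unfolding powr_add[symmetric] by simp
  then have hZ: "sqrt (Z powr (-3)) * hweight L 1 (\<xi> - \<eta>) = 1 / Z"
    using sqrt_powr_minus_two[OF Z] by (simp only: hweight_def Z_def[symmetric] real_sqrt_mult[symmetric])
  have hY: "sqrt (Y powr \<alpha>) * hweight L (-\<alpha>) \<eta> = 1"
    using Y by (simp add: hweight_def Y_def[symmetric] real_sqrt_mult[symmetric] powr_add[symmetric])
  have "hweight L (-1-\<alpha>) \<xi> * (\<bar>c\<bar> * cmod (\<phi> (\<xi> - \<eta>)) * cmod (v \<eta>))
      \<le> hweight L (-1-\<alpha>) \<xi> * (\<bar>c\<bar> * (A (\<xi> - \<eta>) / Z) * cmod (v \<eta>))"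
    using \<phi>[of "\<xi> - \<eta>"] False
    by (intro mult_left_mono mult_right_mono) (simp_all add: Z_def hweight_nonneg)
  also have "\<dots> = hweight L (-1-\<alpha>) \<xi> * \<bar>c\<bar> * (sqrt (Z powr (-3)) * hweight L 1 (\<xi> - \<eta>))
      * (sqrt (Y powr \<alpha>) * hweight L (-\<alpha>) \<eta>) * A (\<xi> - \<eta>) * cmod (v \<eta>)"
    unfolding hZ hY by simp
  also have "\<dots> = KB L \<alpha> \<xi> \<eta> * (hweight L 1 (\<xi> - \<eta>) * A (\<xi> - \<eta>)) * (hweight L (-\<alpha>) \<eta> * cmod (v \<eta>))"
    unfolding K by (simp only: mult_ac)
  finally show ?thesis by (simp only: c_def)
qed

lemma jac_diff_weighted_square_sum_le:
  fixes \<psi> \<psi>b \<psi>d q qb d :: sfield and Aq Ab Ad :: "int \<times> int \<Rightarrow> real"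
  assumes L: "L > 0" and \<alpha>: "0 < \<alpha>" "\<alpha> < 1"
    and A: "\<And>\<zeta>. Aq \<zeta> \<ge> 0" "\<And>\<zeta>. Ab \<zeta> \<ge> 0" "\<And>\<zeta>. Ad \<zeta> \<ge> 0"
    and dom: "\<And>\<zeta>. \<zeta> \<noteq> (0,0) \<Longrightarrow> cmod (\<psi> \<zeta>) \<le> Aq \<zeta> / ksq L \<zeta>"
      "\<And>\<zeta>. \<zeta> \<noteq> (0,0) \<Longrightarrow> cmod (\<psi>b \<zeta>) \<le> Ab \<zeta> / ksq L \<zeta>"
      "\<And>\<zeta>. \<zeta> \<noteq> (0,0) \<Longrightarrow> cmod (\<psi>d \<zeta>) \<le> Ad \<zeta> / ksq L \<zeta>"
    and lin: "\<And>\<zeta>. \<psi> \<zeta> - \<psi>b \<zeta> = \<psi>d \<zeta>" "\<And>\<eta>. q \<eta> - qb \<eta> = d \<eta>"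
    and sA: "(\<lambda>\<zeta>. (hweight L (-\<alpha>) \<zeta> * Aq \<zeta>)^2) summable_on UNIV"
      "(\<lambda>\<zeta>. (hweight L 1 \<zeta> * Ab \<zeta>)^2) summable_on UNIV"
      "(\<lambda>\<zeta>. (hweight L (-\<alpha>) \<zeta> * Ad \<zeta>)^2) summable_on UNIV"
    and sq: "(\<lambda>\<eta>. (hweight L 0 \<eta> * cmod (q \<eta>))^2) summable_on UNIV"
      "(\<lambda>\<eta>. (hweight L 0 \<eta> * cmod (qb \<eta>))^2) summable_on UNIV"
      "(\<lambda>\<eta>. (hweight L (-\<alpha>) \<eta> * cmod (d \<eta>))^2) summable_on UNIV"
  defines "D \<equiv> \<lambda>\<xi>. hweight L (-1-\<alpha>) \<xi> * cmod (jac L \<psi> q \<xi> - jac L \<psi>b qb \<xi>)"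
  shows "(\<lambda>\<xi>. (D \<xi>)^2) summable_on UNIV"
    and "(\<Sum>\<^sub>\<infinity>\<xi>. (D \<xi>)^2)
      \<le> 4 * KA_const L \<alpha> * (\<Sum>\<^sub>\<infinity>\<zeta>. (hweight L (-\<alpha>) \<zeta> * Ad \<zeta>)^2) * (\<Sum>\<^sub>\<infinity>\<eta>. (hweight L 0 \<eta> * cmod (q \<eta>))^2)
       + 4 * KB_const L \<alpha> * (\<Sum>\<^sub>\<infinity>\<zeta>. (hweight L 1 \<zeta> * Ab \<zeta>)^2) * (\<Sum>\<^sub>\<infinity>\<eta>. (hweight L (-\<alpha>) \<eta> * cmod (d \<eta>))^2)"
proof -
  have sAb: "(\<lambda>\<zeta>. (hweight L (-\<alpha>) \<zeta> * Ab \<zeta>)^2) summable_on UNIV"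
    by (rule hweight_summable_mono[OF L _ sA(2)]) (use \<alpha> in simp)
  define SA SB where
    "SA \<xi> = (\<Sum>\<^sub>\<infinity>\<eta>. KA L \<alpha> \<xi> \<eta> * (hweight L (-\<alpha>) (\<xi> - \<eta>) * Ad (\<xi> - \<eta>)) * (hweight L 0 \<eta> * cmod (q \<eta>)))"
    and "SB \<xi> = (\<Sum>\<^sub>\<infinity>\<eta>. KB L \<alpha> \<xi> \<eta> * (hweight L 1 (\<xi> - \<eta>) * Ab (\<xi> - \<eta>)) * (hweight L (-\<alpha>) \<eta> * cmod (d \<eta>)))"
    for \<xi>
  have D0: "0 \<le> D \<xi>" for \<xi>
    by (simp add: D_def hweight_nonneg)
  have D: "D \<xi> \<le> SA \<xi> + SB \<xi>" for \<xi>
  proof (cases "\<xi> = (0,0)")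
    case True
    have "SA \<xi> \<ge> 0" "SB \<xi> \<ge> 0"
      unfolding SA_def SB_def
      by (intro infsum_nonneg mult_nonneg_nonneg KA_nonneg KB_nonneg hweight_nonneg A norm_ge_zero)+
    with True show ?thesis by (simp add: D_def)
  next
    case False
    show ?thesis
      unfolding D_def SA_def SB_def
    proof (rule weighted_jac_diff_le[OF hweight_pos[OF L False] lin])
      show "(\<lambda>\<eta>. KA L \<alpha> \<xi> \<eta> * (hweight L (-\<alpha>) (\<xi> - \<eta>) * Aq (\<xi> - \<eta>)) * (hweight L 0 \<eta> * cmod (q \<eta>)))
          summable_on UNIV"
        by (rule KA_convolution_summable[OF L \<alpha> sA(1) sq(1)])
      show "(\<lambda>\<eta>. KA L \<alpha> \<xi> \<eta> * (hweight L (-\<alpha>) (\<xi> - \<eta>) * Ab (\<xi> - \<eta>)) * (hweight L 0 \<eta> * cmod (qb \<eta>)))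
          summable_on UNIV"
        by (rule KA_convolution_summable[OF L \<alpha> sAb sq(2)])
    qed (use KA_convolution_summable[OF L \<alpha> sA(3) sq(1)] KB_convolution_summable[OF L \<alpha> sA(2) sq(3)]
        KA_pointwise_le[where \<phi> = \<psi> and A = Aq, OF L A(1) dom(1)]
        KA_pointwise_le[where \<phi> = \<psi>b and A = Ab, OF L A(2) dom(2)]
        KA_pointwise_le[where \<phi> = \<psi>d and A = Ad, OF L A(3) dom(3)]
        KB_pointwise_le[where \<phi> = \<psi>b and A = Ab, OF L A(2) dom(2)] in blast)+
  qed
  have SA: "(\<lambda>\<xi>. (SA \<xi>)^2) summable_on UNIV" and SB: "(\<lambda>\<xi>. (SB \<xi>)^2) summable_on UNIV"
    using KA_convolution_square_summable[OF L \<alpha> sA(3) sq(1)] KB_convolution_square_summable[OF L \<alpha> sA(2) sq(3)]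
    by (simp_all add: SA_def SB_def)
  note S = square_sum_le_of_le_add[of D SA SB, OF D0 D SA SB]
  show "(\<lambda>\<xi>. (D \<xi>)^2) summable_on UNIV"
    by (rule S(1))
  show "(\<Sum>\<^sub>\<infinity>\<xi>. (D \<xi>)^2)
      \<le> 4 * KA_const L \<alpha> * (\<Sum>\<^sub>\<infinity>\<zeta>. (hweight L (-\<alpha>) \<zeta> * Ad \<zeta>)^2) * (\<Sum>\<^sub>\<infinity>\<eta>. (hweight L 0 \<eta> * cmod (q \<eta>))^2)
       + 4 * KB_const L \<alpha> * (\<Sum>\<^sub>\<infinity>\<zeta>. (hweight L 1 \<zeta> * Ab \<zeta>)^2) * (\<Sum>\<^sub>\<infinity>\<eta>. (hweight L (-\<alpha>) \<eta> * cmod (d \<eta>))^2)"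
    using S(2) KA_convolution_square_sum_le[OF L \<alpha> sA(3) sq(1)] KB_convolution_square_sum_le[OF L \<alpha> sA(2) sq(3)]
    unfolding SA_def SB_def by linarith
qed

lemma Rop_diff_component:
  assumes L: "L > 0" and S: "S1 > 0" "S2 > 0" and \<alpha>: "0 < \<alpha>" "\<alpha> < 1"
    and q: "inHv L 0 q" and qb: "inHv L 1 qb" and sel: "sel \<in> {fst, snd}"
  defines "R \<equiv> sel (vdiff (Rop L S1 S2 q) (Rop L S1 S2 qb))" and "d \<equiv> vdiff q qb"
  shows "inH L (-1-\<alpha>) R"
    and "Hnorm2 L (-1-\<alpha>) R \<le> 8 * KA_const L \<alpha> * (Hvnorm L (-\<alpha>) d)^2 * Hnorm2 L 0 (sel q)
           + 8 * KB_const L \<alpha> * (Hvnorm L 1 qb)^2 * Hnorm2 L (-\<alpha>) (sel d)"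
proof -
  define \<psi> \<psi>b \<psi>d where "\<psi> = sel (invop L S1 S2 q)" and "\<psi>b = sel (invop L S1 S2 qb)"
    and "\<psi>d = sel (invop L S1 S2 d)"
  define Aq Ab Ad where "Aq \<zeta> = cmod (fst q \<zeta>) + cmod (snd q \<zeta>)"
    and "Ab \<zeta> = cmod (fst qb \<zeta>) + cmod (snd qb \<zeta>)" and "Ad \<zeta> = cmod (fst d \<zeta>) + cmod (snd d \<zeta>)" for \<zeta>
  have R: "R = (\<lambda>\<xi>. - (jac L \<psi> (sel q) \<xi> - jac L \<psi>b (sel qb) \<xi>))"
    using sel by (auto simp: R_def vdiff_def Rop_def Let_def \<psi>_def \<psi>b_def)
  have q\<alpha>: "inHv L (-\<alpha>) q" and qb0: "inHv L 0 qb" and qb\<alpha>: "inHv L (-\<alpha>) qb"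
    using inHv_mono[OF L _ q, of "-\<alpha>"] inHv_mono[OF L _ qb, of 0] inHv_mono[OF L _ qb, of "-\<alpha>"] \<alpha> by simp_all
  have d: "inHv L (-\<alpha>) d"
    unfolding d_def by (rule inHv_vdiff[OF q\<alpha> qb\<alpha>])
  have A: "Aq \<zeta> \<ge> 0" "Ab \<zeta> \<ge> 0" "Ad \<zeta> \<ge> 0" for \<zeta>
    by (simp_all add: Aq_def Ab_def Ad_def)
  have dom: "cmod (\<psi> \<zeta>) \<le> Aq \<zeta> / ksq L \<zeta>" "cmod (\<psi>b \<zeta>) \<le> Ab \<zeta> / ksq L \<zeta>" "cmod (\<psi>d \<zeta>) \<le> Ad \<zeta> / ksq L \<zeta>"
    if "\<zeta> \<noteq> (0,0)" for \<zeta>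
    unfolding \<psi>_def \<psi>b_def \<psi>d_def Aq_def Ab_def Ad_def by (intro invop_norm_le L S that sel)+
  have lin: "\<psi> \<zeta> - \<psi>b \<zeta> = \<psi>d \<zeta>" "sel q \<zeta> - sel qb \<zeta> = sel d \<zeta>" for \<zeta>
    using invop_diff[OF sel] sel by (auto simp: \<psi>_def \<psi>b_def \<psi>d_def d_def vdiff_def)
  note J = jac_diff_weighted_square_sum_le[OF L \<alpha> A dom lin
      sum_hweight_norms_le(1)[OF q\<alpha>, folded Aq_def] sum_hweight_norms_le(1)[OF qb, folded Ab_def]
      sum_hweight_norms_le(1)[OF d, folded Ad_def]
      inHv_component(3)[OF q sel] inHv_component(3)[OF qb0 sel] inHv_component(3)[OF d sel]]
  have est: "(\<lambda>\<xi>. (hweight L (-1-\<alpha>) \<xi> * cmod (R \<xi>))^2) summable_on UNIV"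
    "(\<Sum>\<^sub>\<infinity>\<xi>. (hweight L (-1-\<alpha>) \<xi> * cmod (R \<xi>))^2)
        \<le> 4 * KA_const L \<alpha> * (\<Sum>\<^sub>\<infinity>\<zeta>. (hweight L (-\<alpha>) \<zeta> * Ad \<zeta>)^2) * Hnorm2 L 0 (sel q)
         + 4 * KB_const L \<alpha> * (\<Sum>\<^sub>\<infinity>\<zeta>. (hweight L 1 \<zeta> * Ab \<zeta>)^2) * Hnorm2 L (-\<alpha>) (sel d)"
    using J unfolding R norm_minus_cancel Hnorm2_eq_infsum by simp_all
  have "hermitian (jac L \<psi> (sel q))" "hermitian (jac L \<psi>b (sel qb))"
    unfolding \<psi>_def \<psi>b_def using q qb sel
    by (auto intro!: jac_hermitian invop_hermitian simp: inHv_def inH_iff)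
  then have "hermitian R"
    unfolding R by (intro hermitian_uminus hermitian_diff)
  with est(1) show "inH L (-1-\<alpha>) R"
    unfolding inH_iff by (simp add: R)
  have "Hnorm2 L (-1-\<alpha>) R
      \<le> 4 * KA_const L \<alpha> * (2 * (Hvnorm L (-\<alpha>) d)^2) * Hnorm2 L 0 (sel q)
       + 4 * KB_const L \<alpha> * (2 * (Hvnorm L 1 qb)^2) * Hnorm2 L (-\<alpha>) (sel d)"
    using est(2) sum_hweight_norms_le(2)[OF d, folded Ad_def] sum_hweight_norms_le(2)[OF qb, folded Ab_def]
    unfolding Hnorm2_eq_infsum
    by (elim order_trans)
      (intro add_mono mult_right_mono mult_left_mono infsum_nonneg; simp add: KA_const_nonneg KB_const_nonneg L)
  then show "Hnorm2 L (-1-\<alpha>) R \<le> 8 * KA_const L \<alpha> * (Hvnorm L (-\<alpha>) d)^2 * Hnorm2 L 0 (sel q)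
           + 8 * KB_const L \<alpha> * (Hvnorm L 1 qb)^2 * Hnorm2 L (-\<alpha>) (sel d)"
    by simp
qed

lemma sqrt_sum_two_components_le:
  fixes a b N1 N2 H1 H2 V1 V2 Q :: real
  assumes "0 \<le> a" "0 \<le> b" "0 \<le> H1" "0 \<le> H2" "0 \<le> V1" "0 \<le> V2" "0 \<le> Q"
    and "N1 \<le> 8 * a * (H1 + H2) * V1 + 8 * b * Q * H1"
    and "N2 \<le> 8 * a * (H1 + H2) * V2 + 8 * b * Q * H2"
  shows "sqrt (N1 + N2) \<le> sqrt (8 * (a + b)) * sqrt (H1 + H2) * (sqrt (V1 + V2) + sqrt Q)"
proof -
  have "N1 + N2 \<le> 8 * a * (H1 + H2) * (V1 + V2) + 8 * b * (H1 + H2) * Q"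
    using assms(8,9) by (simp add: algebra_simps)
  also have "\<dots> \<le> 8 * (a + b) * (H1 + H2) * ((V1 + V2) + Q)"
    using assms(1-7) by (simp add: algebra_simps add_nonneg_nonneg mult_nonneg_nonneg)
  finally have "sqrt (N1 + N2) \<le> sqrt (8 * (a + b)) * sqrt (H1 + H2) * sqrt ((V1 + V2) + Q)"
    by (simp add: real_sqrt_mult[symmetric] real_sqrt_le_mono)
  also have "\<dots> \<le> sqrt (8 * (a + b)) * sqrt (H1 + H2) * (sqrt (V1 + V2) + sqrt Q)"
    using assms(1-7) by (intro mult_left_mono sqrt_add_le_add_sqrt) simp_all
  finally show ?thesis .
qed

theorem mainTheorem10:
  fixes L S1 S2 \<alpha> :: real
  assumes "L > 0" and "S1 > 0" and "S2 > 0" and "0 < \<alpha>" and "\<alpha> < 1"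
  shows "\<exists>C. \<forall>q qb. inHv L 0 q \<longrightarrow> inHv L 1 qb \<longrightarrow>
           inHv L (-1-\<alpha>) (vdiff (Rop L S1 S2 q) (Rop L S1 S2 qb)) \<and>
           Hvnorm L (-1-\<alpha>) (vdiff (Rop L S1 S2 q) (Rop L S1 S2 qb))
             \<le> C * Hvnorm L (-\<alpha>) (vdiff q qb) * (Hvnorm L 0 q + Hvnorm L 1 qb)"
proof (intro exI allI impI)
  fix q qb
  assume q: "inHv L 0 q" and qb: "inHv L 1 qb"
  note fst = Rop_diff_component[OF assms q qb, of fst, unfolded Hvnorm_sq]
    and snd = Rop_diff_component[OF assms q qb, of snd, unfolded Hvnorm_sq]
  have H: "Hnorm2 L s c \<ge> 0" for s c
    unfolding Hnorm2_def by (rule infsum_nonneg) simp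
  show "inHv L (-1-\<alpha>) (vdiff (Rop L S1 S2 q) (Rop L S1 S2 qb)) \<and>
      Hvnorm L (-1-\<alpha>) (vdiff (Rop L S1 S2 q) (Rop L S1 S2 qb))
        \<le> sqrt (8 * (KA_const L \<alpha> + KB_const L \<alpha>)) * Hvnorm L (-\<alpha>) (vdiff q qb) * (Hvnorm L 0 q + Hvnorm L 1 qb)"
    using fst(1) snd(1) sqrt_sum_two_components_le[OF KA_const_nonneg KB_const_nonneg H H H H add_nonneg_nonneg[OF H H] fst(2) snd(2)] assms(1)
    by (simp add: inHv_def Hvnorm_def)
qed

end
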